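(* Let $A$ and $G$ be nonzero torsion-free abelian groups with the same nucleus $R$ such that $\mathrm{Ext}(A,\bigoplus_\omega G)=0$. Then $A$ is an $\aleph_1$-free $R$-module.
   Context: For a torsion-free abelian group $X\neq0$, $\mathrm{nuc}\,X$ is the largest subring $R$ of $\mathbb{Q}$ such that $X$ is an $R$-module. $\bigoplus_\omega G$ denotes the direct sum of countably many copies of $G$. An $R$-module is $\aleph_1$-free if every countably generated $R$-submodule is free. *)

theory Defs
  imports Complex_Main "HOL-Library.Function_Algebras" "HOL-Library.Countable_Set"
begin

text \<open>Abelian groups are modelled as types of class ab_group_add (the whole type is the group).\<close>

definition nmul :: "nat \<Rightarrow> 'a::ab_group_add \<Rightarrow> 'a" where
  "nmul n x = (\<Sum>i<n. x)"

definition torsion_free :: "'a::ab_group_add itself \<Rightarrow> bool" where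
  "torsion_free _ \<longleftrightarrow> (\<forall>n (x::'a). n > 0 \<longrightarrow> nmul n x = 0 \<longrightarrow> x = 0)"

definition nonzero_group :: "'a::ab_group_add itself \<Rightarrow> bool" where
  "nonzero_group _ \<longleftrightarrow> (\<exists>x::'a. x \<noteq> 0)"

definition rat_subring :: "rat set \<Rightarrow> bool" where
  "rat_subring R \<longleftrightarrow> 1 \<in> R \<and> (\<forall>r\<in>R. \<forall>s\<in>R. r + s \<in> R \<and> r * s \<in> R \<and> - r \<in> R)"

definition rmodule :: "rat set \<Rightarrow> (rat \<Rightarrow> 'a::ab_group_add \<Rightarrow> 'a) \<Rightarrow> bool" where
  "rmodule R smul \<longleftrightarrow>
     (\<forall>r\<in>R. \<forall>s\<in>R. \<forall>x y.
        smul r (x + y) = smul r x + smul r y \<and>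
        smul (r + s) x = smul r x + smul s x \<and>
        smul (r * s) x = smul r (smul s x) \<and>
        smul 1 x = x)"

definition is_module_over :: "rat set \<Rightarrow> 'a::ab_group_add itself \<Rightarrow> bool" where
  "is_module_over R _ \<longleftrightarrow> (\<exists>smul :: rat \<Rightarrow> 'a \<Rightarrow> 'a. rmodule R smul)"

definition is_nucleus :: "rat set \<Rightarrow> 'a::ab_group_add itself \<Rightarrow> bool" where
  "is_nucleus R X \<longleftrightarrow> rat_subring R \<and> is_module_over R X \<and>
     (\<forall>R'. rat_subring R' \<and> is_module_over R' X \<longrightarrow> R' \<subseteq> R)"

definition dsum_omega :: "'g::ab_group_add itself \<Rightarrow> (nat \<Rightarrow> 'g) set" where
  "dsum_omega _ = {f. finite {n. f n \<noteq> 0}}"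

text \<open>Ext(A,B) = 0 for a subgroup B of 'b, via factor sets (Fuchs): every (symmetric)
  factor set A x A -> B is trivial, i.e. every extension of B by A splits.\<close>
definition factor_set :: "'b::ab_group_add set \<Rightarrow> ('a::ab_group_add \<Rightarrow> 'a \<Rightarrow> 'b) \<Rightarrow> bool" where
  "factor_set B f \<longleftrightarrow> (\<forall>x y. f x y \<in> B) \<and> (\<forall>x y. f x y = f y x) \<and>
     (\<forall>x y z. f x y + f (x + y) z = f x (y + z) + f y z)"

definition ext_zero :: "'a::ab_group_add itself \<Rightarrow> 'b::ab_group_add set \<Rightarrow> bool" where
  "ext_zero _ B \<longleftrightarrow> (\<forall>f :: 'a \<Rightarrow> 'a \<Rightarrow> 'b. factor_set B f \<longrightarrow>
      (\<exists>g :: 'a \<Rightarrow> 'b. (\<forall>x. g x \<in> B) \<and> (\<forall>x y. f x y = g x + g y - g (x + y))))"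

definition rspan :: "rat set \<Rightarrow> (rat \<Rightarrow> 'a::ab_group_add \<Rightarrow> 'a) \<Rightarrow> 'a set \<Rightarrow> 'a set" where
  "rspan R smul S = {x. \<exists>T c. finite T \<and> T \<subseteq> S \<and> (\<forall>t\<in>T. c t \<in> R) \<and> x = (\<Sum>t\<in>T. smul (c t) t)}"

definition rsubmodule :: "rat set \<Rightarrow> (rat \<Rightarrow> 'a::ab_group_add \<Rightarrow> 'a) \<Rightarrow> 'a set \<Rightarrow> bool" where
  "rsubmodule R smul M \<longleftrightarrow> 0 \<in> M \<and> (\<forall>x\<in>M. \<forall>y\<in>M. x + y \<in> M) \<and> (\<forall>r\<in>R. \<forall>x\<in>M. smul r x \<in> M)"

definition rindep :: "rat set \<Rightarrow> (rat \<Rightarrow> 'a::ab_group_add \<Rightarrow> 'a) \<Rightarrow> 'a set \<Rightarrow> bool" where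
  "rindep R smul B \<longleftrightarrow> (\<forall>T c. finite T \<longrightarrow> T \<subseteq> B \<longrightarrow> (\<forall>t\<in>T. c t \<in> R) \<longrightarrow>
      (\<Sum>t\<in>T. smul (c t) t) = 0 \<longrightarrow> (\<forall>t\<in>T. c t = 0))"

definition rfree :: "rat set \<Rightarrow> (rat \<Rightarrow> 'a::ab_group_add \<Rightarrow> 'a) \<Rightarrow> 'a set \<Rightarrow> bool" where
  "rfree R smul M \<longleftrightarrow> (\<exists>B. B \<subseteq> M \<and> rindep R smul B \<and> rspan R smul B = M)"

definition aleph1_free :: "rat set \<Rightarrow> (rat \<Rightarrow> 'a::ab_group_add \<Rightarrow> 'a) \<Rightarrow> bool" where
  "aleph1_free R smul \<longleftrightarrow> (\<forall>M. rsubmodule R smul M \<longrightarrow>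
      (\<exists>S. countable S \<and> S \<subseteq> M \<and> rspan R smul S = M) \<longrightarrow> rfree R smul M)"

end

theory Submission
  imports Defs
begin

text \<open>
  If \<open>A\<close> were not \<open>\<aleph>\<^sub>1\<close>-free, some submodule \<open>M\<close> generated by \<open>x\<^sub>0, x\<^sub>1, \<dots>\<close> would not be
  free. Filter \<open>M\<close> by the purifications \<open>P\<^sub>n\<close> of \<open>\<langle>x\<^sub>0, \<dots>, x\<^sub>n\<^sub>-\<^sub>1\<rangle>\<close>: each quotient
  \<open>P\<^sub>n\<^sub>+\<^sub>1 / P\<^sub>n\<close> embeds in \<open>\<rat>\<close>, and if every such image were a cyclic \<open>R\<close>-module, bases of the
  \<open>P\<^sub>n\<close> could be extended step by step to a basis of \<open>M\<close>. So some image contains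
  \<open>1 = m\<^sub>0 q\<^sub>1, q\<^sub>1 = m\<^sub>1 q\<^sub>2, \<dots>\<close> with non-units \<open>m\<^sub>i\<close> of \<open>R\<close>, giving \<open>z\<^sub>i \<equiv> m\<^sub>i z\<^sub>i\<^sub>+\<^sub>1\<close> modulo the
  finitely generated \<open>P\<^sub>n\<close>. As \<open>R = nuc G\<close>, some \<open>g\<^sub>j \<in> G\<close> is not divisible by \<open>m\<^sub>j\<close>. The map
  \<open>z \<mapsto> (m\<^sub>0 \<cdots> m\<^sub>j\<^sub>-\<^sub>1 height(z) g\<^sub>j)\<^sub>j\<close> into \<open>\<Prod> G\<close> is additive modulo \<open>\<Oplus>\<^sub>\<omega> G\<close>; its coboundary, a
  symmetric cocycle with values in \<open>\<Oplus>\<^sub>\<omega> G\<close>, extends to all of \<open>A\<close> (Zorn, one cyclic extension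
  at a time) and then splits since \<open>Ext(A, \<Oplus>\<^sub>\<omega> G) = 0\<close>. The corrected homomorphism vanishes on
  \<open>P\<^sub>n\<close> in almost all coordinates, and evaluating it on \<open>z\<^sub>0 \<equiv> m\<^sub>0 \<cdots> m\<^sub>j z\<^sub>j\<^sub>+\<^sub>1\<close> makes \<open>g\<^sub>j\<close>
  divisible by \<open>m\<^sub>j\<close>.
\<close>

section \<open>Integer multiples and subgroups\<close>

lemma nmul_0 [simp]: "nmul 0 x = 0"
  by (simp add: nmul_def)

lemma nmul_Suc: "nmul (Suc n) x = nmul n x + x"
  by (simp add: nmul_def)

lemma nmul_add_right: "nmul n (x + y) = nmul n x + nmul n y"
  by (induction n) (simp_all add: nmul_Suc algebra_simps)

lemma nmul_apply: "nmul n (f :: 'i \<Rightarrow> 'b::ab_group_add) j = nmul n (f j)"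
  by (induction n) (simp_all add: nmul_Suc)

definition zmul :: "int \<Rightarrow> 'a::ab_group_add \<Rightarrow> 'a" where
  "zmul k x = nmul (nat k) x - nmul (nat (- k)) x"

lemma zmul_0_left [simp]: "zmul 0 x = 0"
  by (simp add: zmul_def)

lemma zmul_1_left [simp]: "zmul 1 x = x"
  by (simp add: zmul_def nmul_def)

lemma zmul_of_nat: "zmul (int n) x = nmul n x"
  by (simp add: zmul_def)

lemma zmul_plus_1: "zmul (k + 1) x = zmul k x + x"
proof (cases "k \<ge> 0")
  case True
  then have "nat (k + 1) = Suc (nat k)" by simp
  with True show ?thesis by (simp add: zmul_def nmul_Suc)
next
  case False
  then have "nat (- k) = Suc (nat (- (k + 1)))" by simp
  with False show ?thesis by (simp add: zmul_def nmul_Suc)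
qed

lemma zmul_minus_1: "zmul (k - 1) x = zmul k x - x"
  using zmul_plus_1 [of "k - 1" x] by simp

lemma zmul_add_left: "zmul (k + l) x = zmul k x + zmul l x"
proof (induction l rule: int_induct [where k = 0])
  case base
  show ?case by simp
next
  case (step1 i)
  then show ?case
    using zmul_plus_1 [of "k + i" x] zmul_plus_1 [of i x] by (simp add: add.assoc)
next
  case (step2 i)
  have "zmul (k + (i - 1)) x = zmul (k + i) x - x"
    using zmul_minus_1 [of "k + i" x] by (simp add: algebra_simps)
  also have "\<dots> = zmul k x + zmul (i - 1) x"
    unfolding step2 zmul_minus_1 by simp
  finally show ?case .
qed

lemma zmul_add_right: "zmul k (x + y) = zmul k x + zmul k y"
  by (simp add: zmul_def nmul_add_right algebra_simps)

lemma zmul_0_right [simp]: "zmul k 0 = 0"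
  using zmul_add_right [of k 0 0] by simp

lemma zmul_minus_right: "zmul k (- x) = - zmul k x"
  using zmul_add_right [of k x "- x"] by (simp add: add_eq_0_iff2)

lemma zmul_diff_right: "zmul k (x - y) = zmul k x - zmul k y"
  using zmul_add_right [of k x "- y"] by (simp add: zmul_minus_right)

lemma zmul_minus_left: "zmul (- k) x = - zmul k x"
  using zmul_add_left [of k "- k" x] by (simp add: add_eq_0_iff2)

lemma zmul_diff_left: "zmul (k - l) x = zmul k x - zmul l x"
  using zmul_add_left [of k "- l" x] by (simp add: zmul_minus_left)

lemma zmul_mult: "zmul (k * l) x = zmul k (zmul l x)"
proof (induction k rule: int_induct [where k = 0])
  case base
  show ?case by simp
next
  case (step1 i)
  then show ?case
    using zmul_plus_1 [of i "zmul l x"] by (simp add: distrib_right zmul_add_left)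
next
  case (step2 i)
  then show ?case
    using zmul_minus_1 [of i "zmul l x"] by (simp add: left_diff_distrib zmul_diff_left)
qed

lemma zmul_apply: "zmul k (f :: 'i \<Rightarrow> 'b::ab_group_add) j = zmul k (f j)"
  by (simp add: zmul_def nmul_apply)

lemma torsion_free_zmul_eq_0:
  assumes "torsion_free TYPE('a::ab_group_add)" and "zmul k (x :: 'a) = 0" and "k \<noteq> 0"
  shows "x = 0"
proof -
  have "nmul (nat \<bar>k\<bar>) x = 0"
    using assms(2) zmul_of_nat [of "nat \<bar>k\<bar>" x] zmul_minus_left [of k x]
    by (cases "k \<ge> 0") auto
  moreover have "nat \<bar>k\<bar> > 0"
    using assms(3) by simp
  ultimately show ?thesis
    using assms(1) unfolding torsion_free_def by blast
qed

lemma torsion_free_zmul_cancel: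
  assumes "torsion_free TYPE('a::ab_group_add)" and "zmul k (x :: 'a) = zmul k y" and "k \<noteq> 0"
  shows "x = y"
  using torsion_free_zmul_eq_0 [OF assms(1), of k "x - y"] assms(2,3) by (simp add: zmul_diff_right)

definition add_subgroup :: "'a::ab_group_add set \<Rightarrow> bool" where
  "add_subgroup S \<longleftrightarrow> 0 \<in> S \<and> (\<forall>x\<in>S. \<forall>y\<in>S. x + y \<in> S) \<and> (\<forall>x\<in>S. - x \<in> S)"

lemma add_subgroupD:
  assumes "add_subgroup S"
  shows add_subgroup_0: "0 \<in> S"
    and add_subgroup_add: "x \<in> S \<Longrightarrow> y \<in> S \<Longrightarrow> x + y \<in> S"
    and add_subgroup_uminus: "x \<in> S \<Longrightarrow> - x \<in> S"
    and add_subgroup_diff: "x \<in> S \<Longrightarrow> y \<in> S \<Longrightarrow> x - y \<in> S"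
  using assms unfolding add_subgroup_def diff_conv_add_uminus by blast+

lemma add_subgroup_zmul:
  assumes "add_subgroup S" and "x \<in> S"
  shows "zmul k x \<in> S"
proof (induction k rule: int_induct [where k = 0])
  case base
  show ?case using add_subgroup_0 [OF assms(1)] by simp
next
  case (step1 i)
  then show ?case using assms by (simp add: zmul_plus_1 add_subgroup_add)
next
  case (step2 i)
  then show ?case using assms by (simp add: zmul_minus_1 add_subgroup_diff)
qed

lemma additive_on_zmul:
  assumes S: "add_subgroup S" and h: "\<forall>x\<in>S. \<forall>y\<in>S. h (x + y) = h x + h y" and "x \<in> S"
  shows "h (zmul k x) = zmul k (h x)"
proof -
  have h0: "h 0 = 0"
    using h add_subgroup_0 [OF S] by (metis add_cancel_right_right add_0)
  have h_minus: "h (- y) = - h y" if "y \<in> S" for y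
  proof -
    have "h (y + - y) = h y + h (- y)"
      using h that add_subgroup_uminus [OF S] by blast
    with h0 show ?thesis by (simp add: add_eq_0_iff2)
  qed
  show ?thesis
  proof (induction k rule: int_induct [where k = 0])
    case base
    show ?case using h0 by simp
  next
    case (step1 i)
    then show ?case
      using assms add_subgroup_zmul [OF S] by (simp add: zmul_plus_1)
  next
    case (step2 i)
    have "h (zmul i x + - x) = h (zmul i x) + h (- x)"
      using h add_subgroup_zmul [OF S \<open>x \<in> S\<close>] add_subgroup_uminus [OF S \<open>x \<in> S\<close>] by blast
    with step2 h_minus [OF \<open>x \<in> S\<close>] show ?case
      by (simp add: zmul_minus_1)
  qed
qed

lemma zmul_int: "zmul k (x :: int) = k * x"
  by (induction k rule: int_induct [where k = 0]) (simp_all add: zmul_plus_1 zmul_minus_1 algebra_simps)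

lemma int_add_subgroup_principal:
  assumes I: "add_subgroup (I :: int set)"
  obtains n where "n \<ge> 0" and "\<And>k. k \<in> I \<longleftrightarrow> n dvd k"
proof (cases "I \<subseteq> {0}")
  case True
  then have "k \<in> I \<longleftrightarrow> 0 dvd k" for k
    using add_subgroup_0 [OF I] by auto
  with that show ?thesis
    by blast
next
  case False
  then obtain k0 where k0: "k0 \<in> I" "k0 \<noteq> 0"
    by blast
  then have "\<bar>k0\<bar> \<in> I"
    using add_subgroup_uminus [OF I] by (cases "k0 \<ge> 0") simp_all
  then have ex: "\<exists>j::nat. j > 0 \<and> int j \<in> I"
    using k0(2) by (intro exI [of _ "nat \<bar>k0\<bar>"]) simp
  define n where "n = int (LEAST j::nat. j > 0 \<and> int j \<in> I)"
  have n: "n > 0" "n \<in> I"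
    using LeastI_ex [OF ex] unfolding n_def by auto
  have minimal: "\<not> (0 < j \<and> j \<in> I)" if "0 \<le> j" "j < n" for j
    using not_less_Least [of "nat j" "\<lambda>j. j > 0 \<and> int j \<in> I"] that unfolding n_def by auto
  have multiples: "q * n \<in> I" for q
    using add_subgroup_zmul [OF I n(2), of q] by (simp add: zmul_int)
  have generated: "k \<in> I \<longleftrightarrow> n dvd k" for k
  proof
    assume "k \<in> I"
    then have "k - (k div n) * n \<in> I"
      using multiples add_subgroup_diff [OF I] by blast
    then have "k mod n \<in> I"
      by (simp add: minus_div_mult_eq_mod)
    moreover have "0 \<le> k mod n" "k mod n < n"
      using n(1) by simp_all
    ultimately show "n dvd k"
      using minimal [of "k mod n"] by (simp add: dvd_eq_mod_eq_0)
  next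
    assume "n dvd k"
    then show "k \<in> I"
      using multiples by (auto simp: mult.commute)
  qed
  show ?thesis
    by (rule that [of n, OF _ generated]) (use n(1) in simp)
qed

section \<open>Modules over subrings of the rationals\<close>

lemma rat_subringD:
  assumes "rat_subring R"
  shows rat_subring_1: "1 \<in> R"
    and rat_subring_add: "r \<in> R \<Longrightarrow> s \<in> R \<Longrightarrow> r + s \<in> R"
    and rat_subring_mult: "r \<in> R \<Longrightarrow> s \<in> R \<Longrightarrow> r * s \<in> R"
    and rat_subring_uminus: "r \<in> R \<Longrightarrow> - r \<in> R"
  using assms by (simp_all add: rat_subring_def)

lemma rat_subring_diff: "rat_subring R \<Longrightarrow> r \<in> R \<Longrightarrow> s \<in> R \<Longrightarrow> r - s \<in> R"
  using rat_subring_add [of R r "- s"] rat_subring_uminus [of R s] by simp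

lemma rat_subring_0: "rat_subring R \<Longrightarrow> 0 \<in> R"
  using rat_subring_diff [of R 1 1] rat_subring_1 [of R] by simp

lemma rat_subring_of_int:
  assumes "rat_subring R"
  shows "of_int k \<in> R"
proof (induction k rule: int_induct [where k = 0])
  case base
  show ?case using rat_subring_0 [OF assms] by simp
next
  case (step1 i)
  then show ?case using rat_subring_add [OF assms step1(2) rat_subring_1 [OF assms]] by simp
next
  case (step2 i)
  then show ?case using rat_subring_diff [OF assms step2(2) rat_subring_1 [OF assms]] by simp
qed

lemma rat_as_fraction:
  fixes r :: rat
  obtains a b :: int where "b > 0" and "r = of_int a / of_int b"
proof -
  obtain a b where "quotient_of r = (a, b)"
    by (cases "quotient_of r")
  then show ?thesis
    using that quotient_of_denom_pos quotient_of_div by blast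
qed

locale rat_module =
  fixes R :: "rat set" and smul :: "rat \<Rightarrow> 'a::ab_group_add \<Rightarrow> 'a"
  assumes subring: "rat_subring R" and module: "rmodule R smul"
begin

lemmas R_1 = rat_subring_1 [OF subring]
  and R_0 = rat_subring_0 [OF subring]
  and R_add = rat_subring_add [OF subring]
  and R_diff = rat_subring_diff [OF subring]
  and R_mult = rat_subring_mult [OF subring]
  and R_uminus = rat_subring_uminus [OF subring]
  and R_of_int = rat_subring_of_int [OF subring]

lemma smul_add_right: "r \<in> R \<Longrightarrow> smul r (x + y) = smul r x + smul r y"
  using module R_1 unfolding rmodule_def by blast

lemma smul_add_left: "r \<in> R \<Longrightarrow> s \<in> R \<Longrightarrow> smul (r + s) x = smul r x + smul s x"
  using module unfolding rmodule_def by blast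

lemma smul_mult: "r \<in> R \<Longrightarrow> s \<in> R \<Longrightarrow> smul (r * s) x = smul r (smul s x)"
  using module unfolding rmodule_def by blast

lemma smul_one [simp]: "smul 1 x = x"
  using module R_1 unfolding rmodule_def by blast

lemma smul_zero_left [simp]: "smul 0 x = 0"
  using smul_add_left [OF R_0 R_0, of x] by simp

lemma smul_zero_right: "r \<in> R \<Longrightarrow> smul r 0 = 0"
  using smul_add_right [of r 0 0] by simp

lemma smul_diff_left: "r \<in> R \<Longrightarrow> s \<in> R \<Longrightarrow> smul (r - s) x = smul r x - smul s x"
  using smul_add_left [OF R_diff, of r s s x] by (simp add: algebra_simps)

lemma smul_of_int: "smul (of_int k) x = zmul k x"
proof (induction k rule: int_induct [where k = 0])
  case base
  show ?case by simp
next
  case (step1 i)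
  then show ?case
    using smul_add_left [OF R_of_int R_1, of i x] by (simp add: zmul_plus_1)
next
  case (step2 i)
  then show ?case
    using smul_diff_left [OF R_of_int R_1, of i x] by (simp add: zmul_minus_1)
qed

lemma smul_of_int_mult: "r \<in> R \<Longrightarrow> smul (of_int k * r) x = zmul k (smul r x)"
  using smul_mult [OF R_of_int] smul_of_int by simp

lemma smul_zmul: "r \<in> R \<Longrightarrow> smul r (zmul k x) = zmul k (smul r x)"
  using smul_mult [OF _ R_of_int, of r k x] smul_of_int_mult [of r k x] smul_of_int
  by (simp add: mult.commute)

lemma smul_sum: "r \<in> R \<Longrightarrow> smul r (sum f A) = (\<Sum>a\<in>A. smul r (f a))"
  by (induction A rule: infinite_finite_induct) (simp_all add: smul_zero_right smul_add_right)

lemma zmul_denom_smul: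
  assumes "r \<in> R" and "r = of_int a / of_int b" and "b \<noteq> 0"
  shows "zmul b (smul r x) = zmul a x"
proof -
  have "of_int b * r = of_int a"
    using assms(2,3) by simp
  then show ?thesis
    using smul_of_int_mult [OF assms(1), of b x] smul_of_int by simp
qed

lemma rspan_0: "0 \<in> rspan R smul S"
  unfolding rspan_def by (rule CollectI, rule exI [of _ "{}"]) simp

lemma rspan_superset: "s \<in> S \<Longrightarrow> s \<in> rspan R smul S"
  unfolding rspan_def using R_1
  by (intro CollectI exI [of _ "{s}"] exI [of _ "\<lambda>_. 1"]) auto

lemma rspan_mono: "S \<subseteq> S' \<Longrightarrow> rspan R smul S \<subseteq> rspan R smul S'"
  unfolding rspan_def by blast

lemma rspan_empty: "rspan R smul {} = {0}"
  unfolding rspan_def by auto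

lemma rspan_add:
  assumes "x \<in> rspan R smul S" and "y \<in> rspan R smul S"
  shows "x + y \<in> rspan R smul S"
proof -
  obtain T1 c1 where 1: "finite T1" "T1 \<subseteq> S" "\<forall>t\<in>T1. c1 t \<in> R" "x = (\<Sum>t\<in>T1. smul (c1 t) t)"
    using assms(1) unfolding rspan_def by blast
  obtain T2 c2 where 2: "finite T2" "T2 \<subseteq> S" "\<forall>t\<in>T2. c2 t \<in> R" "y = (\<Sum>t\<in>T2. smul (c2 t) t)"
    using assms(2) unfolding rspan_def by blast
  define d1 where "d1 t = (if t \<in> T1 then c1 t else 0)" for t
  define d2 where "d2 t = (if t \<in> T2 then c2 t else 0)" for t
  have d1: "d1 t \<in> R" and d2: "d2 t \<in> R" for t
    using 1 2 R_0 by (simp_all add: d1_def d2_def)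
  have "x = (\<Sum>t\<in>T1 \<union> T2. smul (d1 t) t)"
    unfolding 1(4) by (rule sum.mono_neutral_cong_left) (auto simp: 1 2 d1_def)
  moreover have "y = (\<Sum>t\<in>T1 \<union> T2. smul (d2 t) t)"
    unfolding 2(4) by (rule sum.mono_neutral_cong_left) (auto simp: 1 2 d2_def)
  ultimately have "x + y = (\<Sum>t\<in>T1 \<union> T2. smul (d1 t + d2 t) t)"
    using smul_add_left [OF d1 d2] by (simp add: sum.distrib)
  moreover have "\<forall>t\<in>T1 \<union> T2. d1 t + d2 t \<in> R"
    using R_add [OF d1 d2] by blast
  ultimately show ?thesis
    unfolding rspan_def using 1(1,2) 2(1,2)
    by (intro CollectI exI [of _ "T1 \<union> T2"] exI [of _ "\<lambda>t. d1 t + d2 t"]) auto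
qed

lemma rspan_smul:
  assumes "r \<in> R" and "x \<in> rspan R smul S"
  shows "smul r x \<in> rspan R smul S"
proof -
  obtain T c where T: "finite T" "T \<subseteq> S" "\<forall>t\<in>T. c t \<in> R" "x = (\<Sum>t\<in>T. smul (c t) t)"
    using assms(2) unfolding rspan_def by blast
  have "smul r x = (\<Sum>t\<in>T. smul (r * c t) t)"
    unfolding T(4) smul_sum [OF assms(1)] using smul_mult [OF assms(1)] T(3) by simp
  moreover have "\<forall>t\<in>T. r * c t \<in> R"
    using T(3) R_mult [OF assms(1)] by simp
  ultimately show ?thesis
    unfolding rspan_def using T(1,2)
    by (intro CollectI exI [of _ T] exI [of _ "\<lambda>t. r * c t"]) auto
qed

lemma rspan_zmul: "x \<in> rspan R smul S \<Longrightarrow> zmul k x \<in> rspan R smul S"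
  using rspan_smul [OF R_of_int, of x S k] by (simp add: smul_of_int)

lemma add_subgroup_rspan: "add_subgroup (rspan R smul S)"
  unfolding add_subgroup_def
  using rspan_0 rspan_add rspan_zmul [of _ S "- 1"] by (simp add: zmul_minus_left)

lemma rspan_diff: "x \<in> rspan R smul S \<Longrightarrow> y \<in> rspan R smul S \<Longrightarrow> x - y \<in> rspan R smul S"
  by (rule add_subgroup_diff [OF add_subgroup_rspan])

lemma rspan_uminus: "x \<in> rspan R smul S \<Longrightarrow> - x \<in> rspan R smul S"
  by (rule add_subgroup_uminus [OF add_subgroup_rspan])

lemma rsubmodule_sum: "rsubmodule R smul M \<Longrightarrow> \<forall>a\<in>A. f a \<in> M \<Longrightarrow> sum f A \<in> M"
  by (induction A rule: infinite_finite_induct) (auto simp: rsubmodule_def)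

lemma rspan_subset:
  assumes "rsubmodule R smul M" and "S \<subseteq> M"
  shows "rspan R smul S \<subseteq> M"
proof
  fix y
  assume "y \<in> rspan R smul S"
  then obtain T c where T: "finite T" "T \<subseteq> S" "\<forall>t\<in>T. c t \<in> R" "y = (\<Sum>t\<in>T. smul (c t) t)"
    unfolding rspan_def by blast
  have "\<forall>t\<in>T. smul (c t) t \<in> M"
    using assms T(2,3) unfolding rsubmodule_def by blast
  then show "y \<in> M"
    using rsubmodule_sum [OF assms(1)] T(4) by simp
qed

lemma rspan_insertE:
  assumes "y \<in> rspan R smul (insert x T)"
  obtains l r where "l \<in> rspan R smul T" and "r \<in> R" and "y = l + smul r x"
proof -
  obtain T1 c where T1: "finite T1" "T1 \<subseteq> insert x T" "\<forall>t\<in>T1. c t \<in> R"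
    "y = (\<Sum>t\<in>T1. smul (c t) t)"
    using assms unfolding rspan_def by blast
  show ?thesis
  proof (cases "x \<in> T1")
    case True
    have "y = (\<Sum>t\<in>T1 - {x}. smul (c t) t) + smul (c x) x"
      unfolding T1(4) using sum.remove [OF T1(1) True] by (simp add: add.commute)
    moreover have "(\<Sum>t\<in>T1 - {x}. smul (c t) t) \<in> rspan R smul T"
      unfolding rspan_def using T1(1-3) by (intro CollectI exI [of _ "T1 - {x}"] exI [of _ c]) auto
    ultimately show ?thesis
      using that T1(3) True by blast
  next
    case False
    then have "y \<in> rspan R smul T"
      unfolding rspan_def using T1 by (intro CollectI exI [of _ T1] exI [of _ c]) auto
    then show ?thesis
      using that [of y 0] R_0 by simp
  qed
qed

lemma rspan_insertI:
  assumes "l \<in> rspan R smul T" and "r \<in> R"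
  shows "l + smul r x \<in> rspan R smul (insert x T)"
proof (rule rspan_add)
  show "l \<in> rspan R smul (insert x T)"
    using assms(1) rspan_mono [of T "insert x T"] by blast
  show "smul r x \<in> rspan R smul (insert x T)"
    by (rule rspan_smul [OF assms(2) rspan_superset]) simp
qed

lemma additive_vanishes_smul:
  fixes h :: "'a \<Rightarrow> 'g::ab_group_add"
  assumes tf: "torsion_free TYPE('g)" and S: "add_subgroup S"
    and h: "\<forall>x\<in>S. \<forall>y\<in>S. h (x + y) = h x + h y"
    and "r \<in> R" "x \<in> S" "smul r x \<in> S" "h x = 0"
  shows "h (smul r x) = 0"
proof -
  obtain a b where "b > 0" and ab: "r = of_int a / of_int b"
    by (rule rat_as_fraction)
  have "zmul b (h (smul r x)) = h (zmul b (smul r x))"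
    using additive_on_zmul [OF S h assms(6)] by simp
  also have "\<dots> = zmul a (h x)"
    using zmul_denom_smul [OF assms(4) ab] \<open>b > 0\<close> additive_on_zmul [OF S h assms(5)] by simp
  finally have "zmul b (h (smul r x)) = 0"
    using assms(7) by simp
  then show ?thesis
    using torsion_free_zmul_eq_0 [OF tf] \<open>b > 0\<close> by blast
qed

lemma additive_vanishes_on_rspan:
  fixes h :: "'a \<Rightarrow> 'g::ab_group_add"
  assumes tf: "torsion_free TYPE('g)" and S: "add_subgroup S" and span: "rspan R smul B \<subseteq> S"
    and h: "\<forall>x\<in>S. \<forall>y\<in>S. h (x + y) = h x + h y" and zero: "\<And>t. t \<in> B \<Longrightarrow> h t = 0"
    and x: "x \<in> rspan R smul B"
  shows "h x = 0"
proof -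
  define M where "M = {x \<in> rspan R smul B. h x = 0}"
  have "rsubmodule R smul M"
    unfolding rsubmodule_def
  proof (intro conjI ballI)
    show "0 \<in> M"
      unfolding M_def using rspan_0 additive_on_zmul [OF S h add_subgroup_0 [OF S], of 0] by simp
    show "x + y \<in> M" if "x \<in> M" "y \<in> M" for x y
      using that unfolding M_def using rspan_add span h by (simp add: subset_iff)
    show "smul r x \<in> M" if "r \<in> R" "x \<in> M" for r x
      using that rspan_smul additive_vanishes_smul [OF tf S h] span unfolding M_def by blast
  qed
  moreover have "B \<subseteq> M"
    unfolding M_def using zero rspan_superset by blast
  ultimately have "rspan R smul B \<subseteq> M"
    by (rule rspan_subset)
  with x show ?thesis
    unfolding M_def by blast
qed

end

section \<open>Divisibility and the nucleus\<close>

definition adjoin_inverse :: "rat set \<Rightarrow> int \<Rightarrow> rat set" where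
  "adjoin_inverse R m = {q. \<exists>r\<in>R. \<exists>k::nat. q = r / of_int m ^ k}"

lemma power_fraction_arith:
  assumes "rat_subring R" and "m \<noteq> 0" and "r1 \<in> R" and "r2 \<in> R"
  shows "r1 / of_int m ^ i + r2 / of_int m ^ j
           = (r1 * of_int m ^ j + r2 * of_int m ^ i) / of_int m ^ (i + j)"
    and "r1 * of_int m ^ j + r2 * of_int m ^ i \<in> R"
    and "r1 / of_int m ^ i * (r2 / of_int m ^ j) = r1 * r2 / of_int m ^ (i + j)"
  using assms rat_subring_of_int [OF assms(1), of "m ^ _"]
  by (simp_all add: field_simps power_add rat_subring_add rat_subring_mult)

lemma rat_subring_adjoin_inverse:
  assumes R: "rat_subring R" and "m \<noteq> 0"
  shows "rat_subring (adjoin_inverse R m)"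
  unfolding rat_subring_def
proof (intro conjI ballI)
  show "1 \<in> adjoin_inverse R m"
    unfolding adjoin_inverse_def using rat_subring_1 [OF R] by force
next
  fix a b
  assume "a \<in> adjoin_inverse R m" and "b \<in> adjoin_inverse R m"
  then obtain r1 k1 r2 k2 where r: "r1 \<in> R" "r2 \<in> R"
    and a: "a = r1 / of_int m ^ k1" and b: "b = r2 / of_int m ^ k2"
    unfolding adjoin_inverse_def by blast
  note sums = power_fraction_arith [OF R \<open>m \<noteq> 0\<close> r, where i = k1 and j = k2]
  show "a + b \<in> adjoin_inverse R m"
    unfolding adjoin_inverse_def a b sums(1) using sums(2) by blast
  show "a * b \<in> adjoin_inverse R m"
    unfolding adjoin_inverse_def a b sums(3) using rat_subring_mult [OF R r] by blast
  show "- a \<in> adjoin_inverse R m"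
    unfolding adjoin_inverse_def a using rat_subring_uminus [OF R r(1)] by force
qed

context rat_module
begin

context
  fixes m :: int
  assumes tf: "torsion_free TYPE('a)" and "m \<noteq> 0" and divisible: "\<And>y::'a. \<exists>x. zmul m x = y"
begin

lemma divisible_power: "\<exists>x. zmul (m ^ k) x = (y :: 'a)"
proof (induction k arbitrary: y)
  case 0
  show ?case by simp
next
  case (Suc k)
  obtain y1 where "zmul m y1 = y"
    using divisible [of y] by blast
  moreover obtain y2 where "zmul (m ^ k) y2 = y1"
    using Suc by blast
  ultimately show ?case
    by (metis power_Suc zmul_mult)
qed

definition adjoined_smul :: "rat \<Rightarrow> 'a \<Rightarrow> 'a" where
  "adjoined_smul q x = (THE y. \<exists>r k. r \<in> R \<and> q = r / of_int m ^ k \<and> zmul (m ^ k) y = smul r x)"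

lemma adjoined_smul_eqI:
  assumes "r \<in> R" "q = r / of_int m ^ k" "zmul (m ^ k) y = smul r x"
  shows "adjoined_smul q x = y"
  unfolding adjoined_smul_def
proof (rule the_equality)
  show "\<exists>r k. r \<in> R \<and> q = r / of_int m ^ k \<and> zmul (m ^ k) y = smul r x"
    using assms by blast
next
  fix y'
  assume "\<exists>r k. r \<in> R \<and> q = r / of_int m ^ k \<and> zmul (m ^ k) y' = smul r x"
  then obtain r' k' where r': "r' \<in> R" "q = r' / of_int m ^ k'" "zmul (m ^ k') y' = smul r' x"
    by blast
  have eq: "of_int (m ^ k') * r = of_int (m ^ k) * r'"
    using assms(2) r'(2) \<open>m \<noteq> 0\<close> by (simp add: field_simps)
  have "zmul (m ^ (k + k')) y = zmul (m ^ k') (smul r x)"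
    using assms(3) by (metis power_add mult.commute zmul_mult)
  also have "\<dots> = zmul (m ^ k) (smul r' x)"
    using eq smul_of_int_mult assms(1) r'(1) by metis
  also have "\<dots> = zmul (m ^ (k + k')) y'"
    using r'(3) by (metis power_add zmul_mult)
  finally show "y' = y"
    using torsion_free_zmul_cancel [OF tf] \<open>m \<noteq> 0\<close> by (metis power_not_zero)
qed

lemma zmul_adjoined_smul: "r \<in> R \<Longrightarrow> zmul (m ^ k) (adjoined_smul (r / of_int m ^ k) x) = smul r x"
  using divisible_power [of k "smul r x"] adjoined_smul_eqI [of r _ k] by auto

lemma rmodule_adjoin_inverse: "rmodule (adjoin_inverse R m) adjoined_smul"
  unfolding rmodule_def
proof (intro ballI allI conjI)
  fix a b x y
  assume "a \<in> adjoin_inverse R m" and "b \<in> adjoin_inverse R m"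
  then obtain r1 k1 r2 k2 where r: "r1 \<in> R" "r2 \<in> R"
    and a: "a = r1 / of_int m ^ k1" and b: "b = r2 / of_int m ^ k2"
    unfolding adjoin_inverse_def by blast
  note sums = power_fraction_arith [OF subring \<open>m \<noteq> 0\<close> r, where i = k1 and j = k2]
  show "adjoined_smul a (x + y) = adjoined_smul a x + adjoined_smul a y"
    using zmul_adjoined_smul [OF r(1), of k1] smul_add_right [OF r(1)]
    by (intro adjoined_smul_eqI [OF r(1) a]) (simp add: zmul_add_right a)
  have "zmul (m ^ (k1 + k2)) (adjoined_smul a x + adjoined_smul b x)
      = zmul (m ^ k2) (smul r1 x) + zmul (m ^ k1) (smul r2 x)"
    using zmul_adjoined_smul [OF r(1), of k1 x] zmul_adjoined_smul [OF r(2), of k2 x] a b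
    by (simp add: zmul_add_right power_add zmul_mult) (metis mult.commute zmul_mult)
  also have "\<dots> = smul (r1 * of_int m ^ k2 + r2 * of_int m ^ k1) x"
    using smul_of_int_mult [OF r(1), of "m ^ k2" x] smul_of_int_mult [OF r(2), of "m ^ k1" x]
      smul_add_left [OF R_mult [OF r(1) R_of_int] R_mult [OF r(2) R_of_int], of "m ^ k2" "m ^ k1" x]
    by (simp add: mult.commute)
  finally show "adjoined_smul (a + b) x = adjoined_smul a x + adjoined_smul b x"
    unfolding a b by (rule adjoined_smul_eqI [OF sums(2) sums(1)])
  have "zmul (m ^ (k1 + k2)) (adjoined_smul a (adjoined_smul b x))
      = zmul (m ^ k2) (smul r1 (adjoined_smul b x))"
    using zmul_adjoined_smul [OF r(1), of k1 "adjoined_smul b x"] a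
    by (metis power_add zmul_mult mult.commute)
  also have "\<dots> = smul (r1 * r2) x"
    using zmul_adjoined_smul [OF r(2), of k2 x] b smul_zmul [OF r(1), symmetric] smul_mult [OF r]
    by simp
  finally show "adjoined_smul (a * b) x = adjoined_smul a (adjoined_smul b x)"
    unfolding a b by (rule adjoined_smul_eqI [OF R_mult [OF r] sums(3)])
  show "adjoined_smul 1 x = x"
    using adjoined_smul_eqI [OF R_1, of 1 0 x x] by simp
qed

end

end

lemma nucleus_not_divisible:
  fixes R :: "rat set" and m :: int
  assumes tf: "torsion_free TYPE('g)" and nuc: "is_nucleus R TYPE('g)"
    and "m \<noteq> 0" and "1 / of_int m \<notin> R"
  obtains g :: "'g::ab_group_add" where "\<forall>y. zmul m y \<noteq> g"
proof (rule ccontr)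
  assume "\<not> thesis"
  with that have divisible: "\<forall>g::'g. \<exists>y. zmul m y = g"
    by blast
  obtain smul :: "rat \<Rightarrow> 'g \<Rightarrow> 'g" where "rat_module R smul"
    using nuc unfolding is_nucleus_def is_module_over_def rat_module_def by blast
  then have "is_module_over (adjoin_inverse R m) TYPE('g)"
    using rat_module.rmodule_adjoin_inverse [OF _ tf \<open>m \<noteq> 0\<close>] divisible
    unfolding is_module_over_def by blast
  moreover have "rat_subring (adjoin_inverse R m)"
    using nuc \<open>m \<noteq> 0\<close> rat_subring_adjoin_inverse unfolding is_nucleus_def by blast
  ultimately have "adjoin_inverse R m \<subseteq> R"
    using nuc unfolding is_nucleus_def by blast
  moreover have "1 / of_int m \<in> adjoin_inverse R m"
    unfolding adjoin_inverse_def using rat_subring_1 nuc unfolding is_nucleus_def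
    by (intro CollectI bexI [of _ 1] exI [of _ 1]) auto
  ultimately show False
    using \<open>1 / of_int m \<notin> R\<close> by blast
qed

lemma nucleus_not_divisible_family:
  fixes R :: "rat set" and m :: "nat \<Rightarrow> int"
  assumes tf: "torsion_free TYPE('g)" and nuc: "is_nucleus R TYPE('g)"
    and "\<And>j. m j \<noteq> 0" and "\<And>j. 1 / of_int (m j) \<notin> R"
  obtains g :: "nat \<Rightarrow> 'g::ab_group_add" where "\<And>j y. zmul (m j) y \<noteq> g j"
proof -
  have "\<forall>j. \<exists>g::'g. \<forall>y. zmul (m j) y \<noteq> g"
  proof
    fix j
    obtain g :: 'g where "\<forall>y. zmul (m j) y \<noteq> g"
      by (rule nucleus_not_divisible [OF tf nuc assms(3,4)])
    then show "\<exists>g::'g. \<forall>y. zmul (m j) y \<noteq> g" ..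
  qed
  then obtain g :: "nat \<Rightarrow> 'g" where "\<forall>j y. zmul (m j) y \<noteq> g j"
    by (metis choice)
  then show ?thesis
    by (intro that) blast
qed

section \<open>Extending symmetric cocycles\<close>

definition cyclic_extension :: "'a::ab_group_add set \<Rightarrow> 'a \<Rightarrow> 'a set" where
  "cyclic_extension S a = {s + zmul k a |s k. s \<in> S}"

lemma cyclic_extensionI: "s \<in> S \<Longrightarrow> s + zmul k a \<in> cyclic_extension S a"
  unfolding cyclic_extension_def by blast

lemma add_subgroup_cyclic_extension:
  assumes S: "add_subgroup S"
  shows "add_subgroup (cyclic_extension S a)"
  unfolding add_subgroup_def
proof (intro conjI ballI)
  show "0 \<in> cyclic_extension S a"
    using cyclic_extensionI [OF add_subgroup_0 [OF S], of 0 a] by simp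
next
  fix x y
  assume "x \<in> cyclic_extension S a" and "y \<in> cyclic_extension S a"
  then obtain s k t l where st: "s \<in> S" "t \<in> S" and "x = s + zmul k a" and "y = t + zmul l a"
    unfolding cyclic_extension_def by blast
  then have "x + y = (s + t) + zmul (k + l) a" and "- x = - s + zmul (- k) a"
    by (simp_all add: zmul_add_left zmul_minus_left algebra_simps)
  then show "x + y \<in> cyclic_extension S a" and "- x \<in> cyclic_extension S a"
    using st add_subgroup_add [OF S] add_subgroup_uminus [OF S] cyclic_extensionI by metis+
qed

lemma subset_cyclic_extension: "S \<subseteq> cyclic_extension S a"
  using cyclic_extensionI [of _ S 0 a] by auto

lemma mem_cyclic_extension: "add_subgroup S \<Longrightarrow> a \<in> cyclic_extension S a"
  using cyclic_extensionI [OF add_subgroup_0, of S 1 a] by simp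

lemma order_modulo_subgroup:
  assumes S: "add_subgroup S"
  obtains n :: int where "n \<ge> 0" and "\<And>k. zmul k a \<in> S \<longleftrightarrow> n dvd k"
proof (rule int_add_subgroup_principal)
  show "add_subgroup {k. zmul k a \<in> S}"
    unfolding add_subgroup_def
    using add_subgroup_0 [OF S] add_subgroup_add [OF S] add_subgroup_uminus [OF S]
    by (simp add: zmul_add_left zmul_minus_left)
qed (use that in simp)

locale symmetric_cocycle =
  fixes X :: "'b::ab_group_add set" and S :: "'a::ab_group_add set" and F :: "'a \<Rightarrow> 'a \<Rightarrow> 'b"
  assumes subgroup: "add_subgroup S"
    and valued: "\<And>u v. u \<in> S \<Longrightarrow> v \<in> S \<Longrightarrow> F u v \<in> X"
    and sym: "\<And>u v. u \<in> S \<Longrightarrow> v \<in> S \<Longrightarrow> F u v = F v u"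
    and cocycle: "\<And>u v w. u \<in> S \<Longrightarrow> v \<in> S \<Longrightarrow> w \<in> S \<Longrightarrow> F u v + F (u + v) w = F u (v + w) + F v w"

lemma symmetric_cocycle_cong:
  assumes "symmetric_cocycle X S F" and "\<forall>u\<in>S. \<forall>v\<in>S. G u v = F u v"
  shows "symmetric_cocycle X S G"
proof -
  interpret symmetric_cocycle X S F
    by (rule assms(1))
  show ?thesis
    unfolding symmetric_cocycle_def
    using subgroup valued sym cocycle assms(2) add_subgroup_add [OF subgroup] by simp
qed

lemma factor_set_iff_symmetric_cocycle: "factor_set X F \<longleftrightarrow> symmetric_cocycle X UNIV F"
  unfolding factor_set_def symmetric_cocycle_def add_subgroup_def by simp

context symmetric_cocycle
begin

lemmas S_0 = add_subgroup_0 [OF subgroup]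
  and S_add = add_subgroup_add [OF subgroup]
  and S_diff = add_subgroup_diff [OF subgroup]

lemma cocycle_three_step:
  assumes "a \<in> S" "b \<in> S" "c \<in> S" "d \<in> S"
  shows "F a b + F (a + b) c + F (a + b + c) d = F c d + F b (c + d) + F a (b + c + d)"
proof -
  have "F (a + b) c + F (a + b + c) d = F (a + b) (c + d) + F c d"
    using cocycle [of "a + b" c d] assms S_add by (simp add: add.assoc)
  moreover have "F a b + F (a + b) (c + d) = F a (b + (c + d)) + F b (c + d)"
    using cocycle [of a b "c + d"] assms S_add by simp
  ultimately show ?thesis
    by (simp add: algebra_simps)
qed

lemma cocycle_three_step_swap:
  assumes "a \<in> S" "b \<in> S" "c \<in> S" "d \<in> S"
  shows "F a b + F (a + b) c + F (a + b + c) d = F a b + F (a + b) d + F (a + b + d) c"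
proof -
  have "F (a + b) c + F (a + b + c) d = F (a + b) (c + d) + F c d"
    using cocycle assms S_add by blast
  moreover have "F (a + b) d + F (a + b + d) c = F (a + b) (c + d) + F c d"
    using cocycle [of "a + b" d c] sym [of d c] assms S_add by (simp add: add.commute)
  ultimately show ?thesis
    by (simp add: add.assoc)
qed

text \<open>For \<open>n > 0\<close> and \<open>c = n * a \<in> S\<close>, writing elements of \<open>S + \<int>a\<close> as \<open>s + k * a\<close> with
  \<open>0 \<le> k < n\<close>, the extension of \<open>F\<close> adds the correction \<open>F (s + t) c - F 0 0\<close> exactly when
  adding the digits \<open>k\<close> and \<open>l\<close> produces a carry.\<close>

definition carry_cocycle :: "'a \<Rightarrow> int \<Rightarrow> 'a \<Rightarrow> int \<Rightarrow> 'a \<Rightarrow> int \<Rightarrow> 'b" where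
  "carry_cocycle c n s k t l = F s t + (if n \<le> k + l then F (s + t) c - F 0 0 else 0)"

lemma carry_cocycle_identity:
  assumes "s \<in> S" "t \<in> S" "r \<in> S" "c \<in> S"
    and "0 \<le> k" "k < n" "0 \<le> l" "l < n" "0 \<le> m" "m < n"
  shows "carry_cocycle c n s k t l
       + carry_cocycle c n (if k + l < n then s + t else s + t + c)
           (if k + l < n then k + l else k + l - n) r m
       = carry_cocycle c n s k (if l + m < n then t + r else t + r + c)
           (if l + m < n then l + m else l + m - n)
       + carry_cocycle c n t l r m"
proof -
  have shuffle1: "F s t + F (s + t) c + F (s + t + c) r = F t r + F s (t + r) + F (s + t + r) c"
    using cocycle_three_step_swap [of s t c r] cocycle [of s t r] assms(1-4)
    by (simp add: add.commute)
  have shuffle2: "F s t + F (s + t) r + F (s + t + r) c = F s (t + r + c) + F t r + F (t + r) c"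
    using cocycle_three_step [of s t r c] cocycle [of t r c] assms(1-4)
    by (simp add: algebra_simps)
  show ?thesis
  proof (cases "k + l < n"; cases "l + m < n")
    assume "k + l < n" "l + m < n"
    moreover have "F s t + F (s + t) r = F s (t + r) + F t r"
      using cocycle assms by blast
    ultimately show ?thesis
      unfolding carry_cocycle_def by (simp add: algebra_simps)
  next
    assume "k + l < n" "\<not> l + m < n"
    moreover have "n \<le> k + l + m" "\<not> n \<le> k + (l + m - n)"
      using calculation assms by auto
    ultimately show ?thesis
      using shuffle2 unfolding carry_cocycle_def by (simp add: algebra_simps)
  next
    assume "\<not> k + l < n" "l + m < n"
    moreover have "n \<le> k + (l + m)" "\<not> n \<le> k + l - n + m"
      using calculation assms by auto
    ultimately show ?thesis
      using shuffle1 unfolding carry_cocycle_def by (simp add: algebra_simps)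
  next
    assume "\<not> k + l < n" "\<not> l + m < n"
    moreover have "(n \<le> k + l - n + m) = (n \<le> k + (l + m - n))"
      by auto
    ultimately show ?thesis
      using shuffle1 shuffle2 cocycle [of s t r] assms unfolding carry_cocycle_def
      by (simp add: algebra_simps)
  qed
qed

lemma extend_free:
  assumes free: "\<And>k. zmul k a \<in> S \<Longrightarrow> k = 0"
  obtains F' where "symmetric_cocycle X (cyclic_extension S a) F'" and "\<forall>u\<in>S. \<forall>v\<in>S. F' u v = F u v"
proof -
  have unique: "s = t" if "s \<in> S" "t \<in> S" "s + zmul k a = t + zmul l a" for s t k l
  proof -
    have "zmul (k - l) a = t - s"
      using that(3) by (simp add: zmul_diff_left algebra_simps)
    then have "k = l"
      using free [of "k - l"] S_diff [OF that(2,1)] by simp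
    with that(3) show ?thesis
      by simp
  qed
  define base where "base x = (THE s. s \<in> S \<and> (\<exists>k. x = s + zmul k a))" for x
  have base_eq: "base (s + zmul k a) = s" if "s \<in> S" for s k
    unfolding base_def using that unique by (intro the_equality) blast+
  have base: "base x \<in> S" "\<exists>k. x = base x + zmul k a" if "x \<in> cyclic_extension S a" for x
    using that base_eq unfolding cyclic_extension_def by auto
  have base_add: "base (x + y) = base x + base y"
    if xy: "x \<in> cyclic_extension S a" "y \<in> cyclic_extension S a" for x y
  proof -
    obtain k l where "x = base x + zmul k a" "y = base y + zmul l a"
      using base xy by blast
    then have "x + y = (base x + base y) + zmul (k + l) a"
      by (simp add: zmul_add_left algebra_simps)
    then show ?thesis
      using base_eq S_add base(1) xy by metis
  qed
  have "symmetric_cocycle X (cyclic_extension S a) (\<lambda>x y. F (base x) (base y))"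
    unfolding symmetric_cocycle_def
    using add_subgroup_cyclic_extension [OF subgroup] base(1) base_add valued sym cocycle
    by (auto simp: add_subgroup_def)
  moreover have "\<forall>u\<in>S. \<forall>v\<in>S. F (base u) (base v) = F u v"
    using base_eq [of _ 0] by simp
  ultimately show ?thesis
    using that by blast
qed

end

locale cyclic_digits =
  fixes S :: "'a::ab_group_add set" and a :: 'a and n :: int
  assumes subgroup: "add_subgroup S" and pos: "n > 0" and order: "\<And>k. zmul k a \<in> S \<longleftrightarrow> n dvd k"
begin

definition base :: "'a \<Rightarrow> 'a" where
  "base x = (THE s. s \<in> S \<and> (\<exists>k. 0 \<le> k \<and> k < n \<and> x = s + zmul k a))"

definition digit :: "'a \<Rightarrow> int" where
  "digit x = (THE k. 0 \<le> k \<and> k < n \<and> (\<exists>s\<in>S. x = s + zmul k a))"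

lemma digits_unique:
  assumes "s \<in> S" "t \<in> S" "s + zmul k a = t + zmul l a" "0 \<le> k" "k < n" "0 \<le> l" "l < n"
  shows "s = t \<and> k = l"
proof -
  have "zmul (k - l) a = t - s"
    using assms(3) by (simp add: zmul_diff_left algebra_simps)
  then have "zmul (k - l) a \<in> S"
    using add_subgroup_diff [OF subgroup assms(2,1)] by simp
  then have "n dvd (k - l)"
    using order by blast
  then have "k = l"
    using dvd_imp_le_int [of "k - l" n] assms(4-7) by (cases "k = l") auto
  with assms(3) show ?thesis
    by simp
qed

lemma base_digit_eq:
  "s \<in> S \<Longrightarrow> 0 \<le> k \<Longrightarrow> k < n \<Longrightarrow> base (s + zmul k a) = s \<and> digit (s + zmul k a) = k"
  unfolding base_def digit_def using digits_unique by (intro conjI the_equality) blast+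

lemma normal_form:
  assumes "x \<in> cyclic_extension S a"
  obtains s k where "s \<in> S" "0 \<le> k" "k < n" "x = s + zmul k a"
proof -
  obtain s k where sk: "s \<in> S" "x = s + zmul k a"
    using assms unfolding cyclic_extension_def by blast
  have "zmul k a = zmul (k div n) (zmul n a) + zmul (k mod n) a"
    using zmul_add_left [of "k div n * n" "k mod n" a] by (simp add: zmul_mult)
  then have "x = (s + zmul (k div n) (zmul n a)) + zmul (k mod n) a"
    using sk by (simp add: add.assoc)
  moreover have "s + zmul (k div n) (zmul n a) \<in> S"
    using sk(1) order [of n] add_subgroup_add [OF subgroup] add_subgroup_zmul [OF subgroup] by simp
  moreover have "0 \<le> k mod n" "k mod n < n"
    using pos by simp_all
  ultimately show ?thesis
    using that by blast
qed

lemma base_digit: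
  assumes "x \<in> cyclic_extension S a"
  shows "base x \<in> S" "0 \<le> digit x" "digit x < n" "x = base x + zmul (digit x) a"
  using normal_form [OF assms] base_digit_eq by metis+

lemma base_digit_add:
  assumes x: "x \<in> cyclic_extension S a" and y: "y \<in> cyclic_extension S a"
  shows "base (x + y) = (if digit x + digit y < n then base x + base y else base x + base y + zmul n a)"
    and "digit (x + y) = (if digit x + digit y < n then digit x + digit y else digit x + digit y - n)"
proof -
  define s where "s = (if digit x + digit y < n then base x + base y else base x + base y + zmul n a)"
  define k where "k = (if digit x + digit y < n then digit x + digit y else digit x + digit y - n)"
  have "(s' + zmul k' a) + (t' + zmul l' a) = (s' + t') + zmul (k' + l') a" for s' t' k' l'
    by (simp add: zmul_add_left algebra_simps)
  then have "x + y = (base x + base y) + zmul (digit x + digit y) a"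
    using base_digit(4) [OF x] base_digit(4) [OF y] by metis
  moreover have "zmul (digit x + digit y) a = zmul n a + zmul (digit x + digit y - n) a"
    using zmul_add_left [of n "digit x + digit y - n" a] by simp
  ultimately have "x + y = s + zmul k a"
    unfolding s_def k_def by (simp add: add.assoc)
  moreover have "s \<in> S" "0 \<le> k" "k < n"
    using base_digit [OF x] base_digit [OF y] add_subgroup_add [OF subgroup] order [of n]
    unfolding s_def k_def by auto
  ultimately show "base (x + y) = s" "digit (x + y) = k"
    using base_digit_eq [of s k] by simp_all
qed

end

context symmetric_cocycle
begin

lemma extend_torsion:
  assumes X: "add_subgroup X" and "n > 0" and order: "\<And>k. zmul k a \<in> S \<longleftrightarrow> n dvd k"
  obtains F' where "symmetric_cocycle X (cyclic_extension S a) F'" and "\<forall>u\<in>S. \<forall>v\<in>S. F' u v = F u v"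
proof -
  interpret d: cyclic_digits S a n
    using subgroup \<open>n > 0\<close> order by unfold_locales
  define c where "c = zmul n a"
  have c: "c \<in> S"
    using order [of n] by (simp add: c_def)
  define F' where "F' x y = carry_cocycle c n (d.base x) (d.digit x) (d.base y) (d.digit y)" for x y
  have "symmetric_cocycle X (cyclic_extension S a) F'"
  proof
    show "add_subgroup (cyclic_extension S a)"
      by (rule add_subgroup_cyclic_extension [OF subgroup])
  next
    fix u v
    assume uv: "u \<in> cyclic_extension S a" "v \<in> cyclic_extension S a"
    then have "F (d.base u) (d.base v) \<in> X" "F (d.base u + d.base v) c - F 0 0 \<in> X"
      using d.base_digit(1) valued S_add c S_0 add_subgroup_diff [OF X] by auto
    then show "F' u v \<in> X"
      unfolding F'_def carry_cocycle_def using add_subgroup_add [OF X] add_subgroup_0 [OF X] by auto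
    show "F' u v = F' v u"
      unfolding F'_def carry_cocycle_def using d.base_digit(1) uv sym by (simp add: add.commute)
  next
    fix u v w
    assume uvw: "u \<in> cyclic_extension S a" "v \<in> cyclic_extension S a" "w \<in> cyclic_extension S a"
    show "F' u v + F' (u + v) w = F' u (v + w) + F' v w"
      unfolding F'_def d.base_digit_add [OF uvw(1,2)] d.base_digit_add [OF uvw(2,3)] c_def [symmetric]
      by (rule carry_cocycle_identity)
        (use d.base_digit(1-3) [OF uvw(1)] d.base_digit(1-3) [OF uvw(2)] d.base_digit(1-3) [OF uvw(3)] c
          in simp_all)
  qed
  moreover have "\<forall>u\<in>S. \<forall>v\<in>S. F' u v = F u v"
    unfolding F'_def carry_cocycle_def using d.base_digit_eq [of _ 0] \<open>n > 0\<close> by simp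
  ultimately show ?thesis
    using that by blast
qed

lemma extend_cyclic:
  assumes "add_subgroup X"
  obtains F' where "symmetric_cocycle X (cyclic_extension S a) F'" and "\<forall>u\<in>S. \<forall>v\<in>S. F' u v = F u v"
proof -
  obtain n where "n \<ge> 0" and order: "\<And>k. zmul k a \<in> S \<longleftrightarrow> n dvd k"
    using order_modulo_subgroup [OF subgroup] by blast
  show ?thesis
  proof (cases "n = 0")
    case True
    then have "\<And>k. zmul k a \<in> S \<Longrightarrow> k = 0"
      using order by simp
    from extend_free [OF this] show ?thesis
      using that by blast
  next
    case False
    with \<open>n \<ge> 0\<close> have "n > 0"
      by simp
    then show ?thesis
      using extend_torsion [OF assms _ order] that by blast
  qed
qed

end

definition cocycle_extends :: "'a set \<times> ('a \<Rightarrow> 'a \<Rightarrow> 'b) \<Rightarrow> 'a set \<times> ('a \<Rightarrow> 'a \<Rightarrow> 'b) \<Rightarrow> bool" where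
  "cocycle_extends p q \<longleftrightarrow> fst p \<subseteq> fst q \<and> (\<forall>u\<in>fst p. \<forall>v\<in>fst p. snd q u v = snd p u v)"

lemma cocycle_extends_trans: "cocycle_extends p q \<Longrightarrow> cocycle_extends q r \<Longrightarrow> cocycle_extends p r"
  unfolding cocycle_extends_def by (metis subsetD subset_trans)

definition chain_union_cocycle :: "('a set \<times> ('a \<Rightarrow> 'a \<Rightarrow> 'b::zero)) set \<Rightarrow> 'a \<Rightarrow> 'a \<Rightarrow> 'b" where
  "chain_union_cocycle C x y = (if \<exists>p\<in>C. x \<in> fst p \<and> y \<in> fst p
    then snd (SOME p. p \<in> C \<and> x \<in> fst p \<and> y \<in> fst p) x y else 0)"

context
  fixes C :: "('a::ab_group_add set \<times> ('a \<Rightarrow> 'a \<Rightarrow> 'b::ab_group_add)) set"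
  assumes chain: "\<forall>p\<in>C. \<forall>q\<in>C. cocycle_extends p q \<or> cocycle_extends q p"
begin

lemma chain_union_cocycle_eq:
  assumes p: "p \<in> C" "x \<in> fst p" "y \<in> fst p"
  shows "chain_union_cocycle C x y = snd p x y"
proof -
  have ex: "\<exists>p. p \<in> C \<and> x \<in> fst p \<and> y \<in> fst p"
    using p by blast
  define q where "q = (SOME p. p \<in> C \<and> x \<in> fst p \<and> y \<in> fst p)"
  have q: "q \<in> C" "x \<in> fst q" "y \<in> fst q"
    using someI_ex [OF ex] unfolding q_def by blast+
  have "chain_union_cocycle C x y = snd q x y"
    unfolding chain_union_cocycle_def q_def by (rule if_P) (use p in blast)
  also have "\<dots> = snd p x y"
  proof -
    have "cocycle_extends p q \<or> cocycle_extends q p"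
      using chain p(1) q(1) by blast
    then show ?thesis
      using p q unfolding cocycle_extends_def by auto
  qed
  finally show ?thesis .
qed

lemma chain_common_member:
  assumes "finite A" and "A \<subseteq> \<Union> (fst ` C)" and "C \<noteq> {}"
  shows "\<exists>p\<in>C. A \<subseteq> fst p"
proof -
  have "subset.chain UNIV (fst ` C)"
    unfolding subset_chain_def using chain unfolding cocycle_extends_def by blast
  then obtain B where "B \<in> fst ` C" "A \<subseteq> B"
    using finite_subset_Union_chain [OF assms(1,2)] \<open>C \<noteq> {}\<close> by blast
  then show ?thesis
    by blast
qed

lemma symmetric_cocycle_Union_chain:
  assumes "C \<noteq> {}" and cocycles: "\<And>p. p \<in> C \<Longrightarrow> symmetric_cocycle X (fst p) (snd p)"
  shows "symmetric_cocycle X (\<Union> (fst ` C)) (chain_union_cocycle C)"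
proof
  show "add_subgroup (\<Union> (fst ` C))"
    unfolding add_subgroup_def
  proof (intro conjI ballI)
    obtain p where p: "p \<in> C"
      using \<open>C \<noteq> {}\<close> by blast
    then show "0 \<in> \<Union> (fst ` C)"
      using symmetric_cocycle.S_0 [OF cocycles [OF p]] by blast
  next
    fix x y
    assume "x \<in> \<Union> (fst ` C)" "y \<in> \<Union> (fst ` C)"
    then obtain p where p: "p \<in> C" "x \<in> fst p" "y \<in> fst p"
      using chain_common_member [of "{x, y}"] \<open>C \<noteq> {}\<close> by blast
    then show "x + y \<in> \<Union> (fst ` C)"
      using symmetric_cocycle.S_add [OF cocycles [OF p(1)]] by blast
  next
    fix x
    assume "x \<in> \<Union> (fst ` C)"
    then obtain p where p: "p \<in> C" "x \<in> fst p"
      by blast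
    then show "- x \<in> \<Union> (fst ` C)"
      using add_subgroup_uminus [OF symmetric_cocycle.subgroup [OF cocycles [OF p(1)]]] by blast
  qed
next
  fix u v
  assume "u \<in> \<Union> (fst ` C)" "v \<in> \<Union> (fst ` C)"
  then obtain p where p: "p \<in> C" "u \<in> fst p" "v \<in> fst p"
    using chain_common_member [of "{u, v}"] \<open>C \<noteq> {}\<close> by blast
  then show "chain_union_cocycle C u v \<in> X" and "chain_union_cocycle C u v = chain_union_cocycle C v u"
    using chain_union_cocycle_eq symmetric_cocycle.valued [OF cocycles [OF p(1)]]
      symmetric_cocycle.sym [OF cocycles [OF p(1)]] by auto
next
  fix u v w
  assume "u \<in> \<Union> (fst ` C)" "v \<in> \<Union> (fst ` C)" "w \<in> \<Union> (fst ` C)"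
  then obtain p where p: "p \<in> C" "u \<in> fst p" "v \<in> fst p" "w \<in> fst p"
    using chain_common_member [of "{u, v, w}"] \<open>C \<noteq> {}\<close> by blast
  interpret p: symmetric_cocycle X "fst p" "snd p"
    by (rule cocycles [OF p(1)])
  show "chain_union_cocycle C u v + chain_union_cocycle C (u + v) w
      = chain_union_cocycle C u (v + w) + chain_union_cocycle C v w"
    using chain_union_cocycle_eq [OF p(1)] p p.cocycle p.S_add by simp
qed

lemma cocycle_extends_Union_chain: "p \<in> C \<Longrightarrow> cocycle_extends p (\<Union> (fst ` C), chain_union_cocycle C)"
  unfolding cocycle_extends_def using chain_union_cocycle_eq by auto

end

text \<open>Partial extensions of \<open>F\<^sub>0\<close>, normalised to vanish outside their domain so that
  \<open>cocycle_extends\<close> becomes antisymmetric.\<close>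

definition cocycle_extensions ::
    "'b::ab_group_add set \<Rightarrow> 'a::ab_group_add set \<Rightarrow> ('a \<Rightarrow> 'a \<Rightarrow> 'b) \<Rightarrow> ('a set \<times> ('a \<Rightarrow> 'a \<Rightarrow> 'b)) set"
  where "cocycle_extensions X S0 F0 = {p. symmetric_cocycle X (fst p) (snd p) \<and>
    cocycle_extends (S0, F0) p \<and> (\<forall>u v. u \<notin> fst p \<or> v \<notin> fst p \<longrightarrow> snd p u v = 0)}"

lemma partial_order_cocycle_extensions:
  fixes F0 :: "'a::ab_group_add \<Rightarrow> 'a \<Rightarrow> 'b::ab_group_add"
  shows "partial_order_on (cocycle_extensions X S0 F0)
    (relation_of cocycle_extends (cocycle_extensions X S0 F0))"
proof (rule partial_order_on_relation_ofI)
  show "cocycle_extends p r" if "cocycle_extends p q" "cocycle_extends q r"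
    for p q r :: "'a set \<times> ('a \<Rightarrow> 'a \<Rightarrow> 'b)"
    using cocycle_extends_trans that .
next
  fix p q
  assume pq: "p \<in> cocycle_extensions X S0 F0" "q \<in> cocycle_extensions X S0 F0"
    "cocycle_extends p q" "cocycle_extends q p"
  then have "fst p = fst q"
    unfolding cocycle_extends_def by blast
  moreover have "snd p u v = snd q u v" for u v
  proof (cases "u \<in> fst p \<and> v \<in> fst p")
    case True
    then show ?thesis
      using pq(3) unfolding cocycle_extends_def by auto
  next
    case False
    then show ?thesis
      using pq(1,2) \<open>fst p = fst q\<close> unfolding cocycle_extensions_def by auto
  qed
  ultimately show "p = q"
    by (simp add: prod_eq_iff fun_eq_iff)
qed (simp add: cocycle_extends_def)

lemma cocycle_extensions_chain_bound:
  assumes F0: "symmetric_cocycle X S0 F0"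
    and C: "C \<in> Chains (relation_of cocycle_extends (cocycle_extensions X S0 F0))"
  shows "\<exists>u\<in>cocycle_extensions X S0 F0. \<forall>p\<in>C. cocycle_extends p u"
proof (cases "C = {}")
  case True
  define F1 where "F1 u v = (if u \<in> S0 \<and> v \<in> S0 then F0 u v else 0)" for u v
  have "symmetric_cocycle X S0 F1"
    using symmetric_cocycle_cong [OF F0, of F1] by (simp add: F1_def)
  then have "(S0, F1) \<in> cocycle_extensions X S0 F0"
    unfolding cocycle_extensions_def cocycle_extends_def by (simp add: F1_def)
  with True show ?thesis
    by blast
next
  case False
  have CA: "C \<subseteq> cocycle_extensions X S0 F0"
    using Chains_relation_of [OF C] .
  have cocycles: "symmetric_cocycle X (fst p) (snd p)" if "p \<in> C" for p
    using CA that unfolding cocycle_extensions_def by blast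
  have chain: "\<forall>p\<in>C. \<forall>q\<in>C. cocycle_extends p q \<or> cocycle_extends q p"
    using C unfolding Chains_def relation_of_def by blast
  note extends = cocycle_extends_Union_chain [OF chain]
  obtain p where p: "p \<in> C"
    using False by blast
  have "cocycle_extends (S0, F0) p"
    using CA p unfolding cocycle_extensions_def by blast
  then have "cocycle_extends (S0, F0) (\<Union> (fst ` C), chain_union_cocycle C)"
    using cocycle_extends_trans extends [OF p] by blast
  moreover have "chain_union_cocycle C u v = 0" if "u \<notin> \<Union> (fst ` C) \<or> v \<notin> \<Union> (fst ` C)" for u v
    using that unfolding chain_union_cocycle_def by auto
  ultimately have "(\<Union> (fst ` C), chain_union_cocycle C) \<in> cocycle_extensions X S0 F0"
    unfolding cocycle_extensions_def using symmetric_cocycle_Union_chain [OF chain False cocycles] by auto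
  then show ?thesis
    using extends by blast
qed

lemma maximal_cocycle_extension:
  assumes X: "add_subgroup X" and m: "m \<in> cocycle_extensions X S0 F0"
    and maximal: "\<forall>p\<in>cocycle_extensions X S0 F0. cocycle_extends m p \<longrightarrow> p = m"
  shows "fst m = UNIV"
proof (rule ccontr)
  interpret m: symmetric_cocycle X "fst m" "snd m"
    using m unfolding cocycle_extensions_def by blast
  assume "fst m \<noteq> UNIV"
  then obtain a where a: "a \<notin> fst m"
    by blast
  define S' where "S' = cyclic_extension (fst m) a"
  obtain F' where F': "symmetric_cocycle X S' F'"
    and agree: "\<forall>u\<in>fst m. \<forall>v\<in>fst m. F' u v = snd m u v"
    unfolding S'_def using m.extend_cyclic [OF X] by blast
  define F'' where "F'' u v = (if u \<in> S' \<and> v \<in> S' then F' u v else 0)" for u v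
  have "fst m \<subseteq> S'"
    unfolding S'_def by (rule subset_cyclic_extension)
  then have ext: "cocycle_extends m (S', F'')"
    unfolding cocycle_extends_def F''_def using agree by auto
  have "cocycle_extends (S0, F0) m"
    using m unfolding cocycle_extensions_def by blast
  then have "cocycle_extends (S0, F0) (S', F'')"
    using cocycle_extends_trans ext by blast
  moreover have "symmetric_cocycle X S' F''"
    using symmetric_cocycle_cong [OF F', of F''] by (simp add: F''_def)
  ultimately have "(S', F'') \<in> cocycle_extensions X S0 F0"
    unfolding cocycle_extensions_def by (simp add: F''_def)
  with ext have "(S', F'') = m"
    using maximal by blast
  then have "a \<in> fst m"
    using mem_cyclic_extension [OF m.subgroup, of a] unfolding S'_def by (metis fst_conv)
  with a show False
    by contradiction
qed

lemma extend_to_factor_set: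
  fixes F0 :: "'a::ab_group_add \<Rightarrow> 'a \<Rightarrow> 'b::ab_group_add"
  assumes X: "add_subgroup X" and F0: "symmetric_cocycle X S0 F0"
  obtains F where "factor_set X F" and "\<forall>u\<in>S0. \<forall>v\<in>S0. F u v = F0 u v"
proof -
  obtain m where m: "m \<in> cocycle_extensions X S0 F0"
    and maximal: "\<forall>p\<in>cocycle_extensions X S0 F0. cocycle_extends m p \<longrightarrow> p = m"
    using predicate_Zorn [OF partial_order_cocycle_extensions cocycle_extensions_chain_bound [OF F0]]
    by blast
  then have "symmetric_cocycle X UNIV (snd m)"
    using maximal_cocycle_extension [OF X m maximal] unfolding cocycle_extensions_def by auto
  moreover have "\<forall>u\<in>S0. \<forall>v\<in>S0. snd m u v = F0 u v"
    using m unfolding cocycle_extensions_def cocycle_extends_def by auto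
  ultimately show ?thesis
    using that factor_set_iff_symmetric_cocycle by blast
qed

lemma add_subgroup_dsum_omega: "add_subgroup (dsum_omega TYPE('g::ab_group_add))"
  unfolding add_subgroup_def dsum_omega_def
proof (intro conjI ballI)
  fix x y :: "nat \<Rightarrow> 'g"
  assume "x \<in> {f. finite {n. f n \<noteq> 0}}" "y \<in> {f. finite {n. f n \<noteq> 0}}"
  moreover have "{n. (x + y) n \<noteq> 0} \<subseteq> {n. x n \<noteq> 0} \<union> {n. y n \<noteq> 0}"
    by auto
  ultimately show "x + y \<in> {f. finite {n. f n \<noteq> 0}}"
    using finite_subset by auto
qed simp_all

lemma dsum_omega_uniform_bound:
  assumes "finite T" and "\<And>t. t \<in> T \<Longrightarrow> f t \<in> dsum_omega TYPE('g::ab_group_add)"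
  obtains J where "\<And>t j. t \<in> T \<Longrightarrow> J \<le> j \<Longrightarrow> f t j = 0"
proof -
  have "finite (\<Union>t\<in>T. {j. f t j \<noteq> 0})"
    using assms unfolding dsum_omega_def by blast
  then obtain J where J: "(\<Union>t\<in>T. {j. f t j \<noteq> 0}) \<subseteq> {..<J}"
    unfolding finite_nat_iff_bounded by blast
  have "f t j = 0" if "t \<in> T" "J \<le> j" for t j
  proof (rule ccontr)
    assume "f t j \<noteq> 0"
    then have "j < J"
      using J that(1) by blast
    with that(2) show False
      by simp
  qed
  with that show ?thesis
    by blast
qed

lemma ext_zero_additive_correction:
  fixes psi :: "'a::ab_group_add \<Rightarrow> 'b::ab_group_add"
  assumes ext: "ext_zero TYPE('a) X" and X: "add_subgroup X" and S: "add_subgroup S"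
    and coboundary: "\<And>u v. u \<in> S \<Longrightarrow> v \<in> S \<Longrightarrow> psi u + psi v - psi (u + v) \<in> X"
  obtains g where "\<And>x. g x \<in> X"
    and "\<And>x y. x \<in> S \<Longrightarrow> y \<in> S \<Longrightarrow> psi (x + y) - g (x + y) = (psi x - g x) + (psi y - g y)"
proof -
  have "symmetric_cocycle X S (\<lambda>u v. psi u + psi v - psi (u + v))"
    using S coboundary by unfold_locales (simp_all add: algebra_simps)
  then obtain F where F: "factor_set X F" "\<forall>u\<in>S. \<forall>v\<in>S. F u v = psi u + psi v - psi (u + v)"
    using extend_to_factor_set [OF X] by blast
  then obtain g where g: "\<forall>x. g x \<in> X" "\<forall>x y. F x y = g x + g y - g (x + y)"
    using ext unfolding ext_zero_def by blast
  show ?thesis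
  proof (rule that)
    show "g x \<in> X" for x
      using g(1) by blast
    fix x y
    assume "x \<in> S" "y \<in> S"
    then have "psi x + psi y - psi (x + y) = g x + g y - g (x + y)"
      using F(2) g(2) by metis
    then show "psi (x + y) - g (x + y) = (psi x - g x) + (psi y - g y)"
      by (simp add: algebra_simps)
  qed
qed

section \<open>Divisibility chains\<close>

text \<open>Modulo \<open>N\<close>, \<open>z\<^sub>i\<close> behaves like \<open>1 / (m\<^sub>0 \<cdots> m\<^sub>i\<^sub>-\<^sub>1)\<close>; \<open>height\<close> records this as a homomorphism
  from \<open>span\<close> to \<open>\<rat>\<close>.\<close>

locale divisibility_chain =
  fixes N :: "'a::ab_group_add set" and m :: "nat \<Rightarrow> int" and z :: "nat \<Rightarrow> 'a"
  assumes subgroup: "add_subgroup N"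
    and nonzero: "\<And>i. m i \<noteq> 0"
    and step: "\<And>i. z i - zmul (m i) (z (Suc i)) \<in> N"
    and independent: "\<And>k. zmul k (z 0) \<in> N \<Longrightarrow> k = 0"
begin

lemmas N_0 = add_subgroup_0 [OF subgroup]
  and N_add = add_subgroup_add [OF subgroup]
  and N_uminus = add_subgroup_uminus [OF subgroup]
  and N_diff = add_subgroup_diff [OF subgroup]
  and N_zmul = add_subgroup_zmul [OF subgroup]

definition denom :: "nat \<Rightarrow> int" where
  "denom i = (\<Prod>l<i. m l)"

definition span :: "'a set" where
  "span = {n + zmul k (z i) |n k i. n \<in> N}"

definition height :: "'a \<Rightarrow> rat" where
  "height x = (THE q. \<exists>n\<in>N. \<exists>k i. x = n + zmul k (z i) \<and> q = of_int k / of_int (denom i))"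

lemma denom_0 [simp]: "denom 0 = 1"
  by (simp add: denom_def)

lemma denom_Suc: "denom (Suc i) = denom i * m i"
  by (simp add: denom_def)

lemma denom_nonzero: "denom i \<noteq> 0"
  using nonzero by (simp add: denom_def)

lemma telescope:
  assumes "i \<le> j"
  obtains c where "denom j = denom i * c" and "z i - zmul c (z j) \<in> N"
proof -
  have "\<exists>c. denom j = denom i * c \<and> z i - zmul c (z j) \<in> N"
    using assms
  proof (induction j)
    case 0
    then show ?case
      using N_0 by (intro exI [of _ 1]) simp
  next
    case (Suc j)
    show ?case
    proof (cases "i = Suc j")
      case True
      then show ?thesis
        using N_0 by (intro exI [of _ 1]) simp
    next
      case False
      then obtain c where c: "denom j = denom i * c" "z i - zmul c (z j) \<in> N"
        using Suc by (metis le_SucE)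
      have "z i - zmul (c * m j) (z (Suc j)) = (z i - zmul c (z j)) + zmul c (z j - zmul (m j) (z (Suc j)))"
        by (simp add: zmul_diff_right zmul_mult)
      then have "z i - zmul (c * m j) (z (Suc j)) \<in> N"
        using c(2) N_add N_zmul step by metis
      then show ?thesis
        using c(1) denom_Suc by (intro exI [of _ "c * m j"]) (simp add: mult.assoc)
    qed
  qed
  with that show ?thesis
    by blast
qed

lemma z0_minus_multiple: "z 0 - zmul (denom i) (z i) \<in> N"
  using telescope [of 0 i] by auto

lemma height_well_defined:
  assumes "n \<in> N" "n' \<in> N" "n + zmul k (z i) = n' + zmul k' (z i')"
  shows "(of_int k / of_int (denom i) :: rat) = of_int k' / of_int (denom i')"
proof -
  have scaled: "zmul (denom i * L) (n + zmul k (z i)) - zmul (k * L) (z 0) \<in> N"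
    if "n \<in> N" for n k i L
  proof -
    define e where "e = z 0 - zmul (denom i) (z i)"
    have e: "e \<in> N" "zmul (denom i) (z i) = z 0 - e"
      using z0_minus_multiple [of i] unfolding e_def by simp_all
    have "zmul (denom i * L) (n + zmul k (z i)) = zmul (denom i * L) n + zmul (k * L) (zmul (denom i) (z i))"
      by (simp add: zmul_add_right zmul_mult [symmetric] algebra_simps)
    also have "\<dots> = zmul (denom i * L) n + zmul (k * L) (z 0) - zmul (k * L) e"
      using e(2) by (simp add: zmul_diff_right)
    finally show ?thesis
      using N_diff N_zmul that e(1) by simp
  qed
  have "zmul (k' * denom i - k * denom i') (z 0) =
      (zmul (denom i * denom i') (n + zmul k (z i)) - zmul (k * denom i') (z 0)) -
      (zmul (denom i' * denom i) (n' + zmul k' (z i')) - zmul (k' * denom i) (z 0))"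
    using assms(3) by (simp add: zmul_diff_left mult.commute)
  then have "zmul (k' * denom i - k * denom i') (z 0) \<in> N"
    using scaled [OF assms(1)] scaled [OF assms(2)] N_diff by simp
  then have "k' * denom i = k * denom i'"
    using independent by fastforce
  then show ?thesis
    using denom_nonzero by (simp add: field_simps) (metis of_int_mult)
qed

lemma height_eq:
  assumes "n \<in> N"
  shows "height (n + zmul k (z i)) = of_int k / of_int (denom i)"
  unfolding height_def
proof (rule the_equality)
  show "\<exists>n'\<in>N. \<exists>k' i'. n + zmul k (z i) = n' + zmul k' (z i') \<and>
      of_int k / of_int (denom i) = of_int k' / of_int (denom i')"
    using assms by blast
next
  fix q :: rat
  assume "\<exists>n'\<in>N. \<exists>k' i'. n + zmul k (z i) = n' + zmul k' (z i') \<and> q = of_int k' / of_int (denom i')"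
  then obtain n' k' i' where n': "n' \<in> N" "n + zmul k (z i) = n' + zmul k' (z i')"
    and q: "q = of_int k' / of_int (denom i')"
    by blast
  show "q = of_int k / of_int (denom i)"
    unfolding q using height_well_defined [OF assms n'] by simp
qed

lemma height_N: "n \<in> N \<Longrightarrow> height n = 0"
  using height_eq [of n 0 0] by simp

lemma height_z0: "height (z 0) = 1"
  using height_eq [OF N_0, of 1 0] by simp

lemma N_subset_span: "N \<subseteq> span"
  unfolding span_def by (force intro: exI [of _ 0])

lemma z_in_span: "z i \<in> span"
  unfolding span_def using N_0 by (force intro: exI [of _ 1])

lemma span_add:
  assumes x: "x \<in> span" and y: "y \<in> span"
  shows "x + y \<in> span" and "height (x + y) = height x + height y"
proof -
  have lift: "\<exists>n'\<in>N. \<exists>k'. n + zmul k (z i) = n' + zmul k' (z I)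
      \<and> (of_int k' :: rat) / of_int (denom I) = of_int k / of_int (denom i)"
    if nI: "n \<in> N" "i \<le> I" for n k i I
  proof -
    obtain c where c: "denom I = denom i * c" "z i - zmul c (z I) \<in> N"
      using telescope [OF nI(2)] by blast
    have "n + zmul k (z i) = (n + zmul k (z i - zmul c (z I))) + zmul (k * c) (z I)"
      by (simp add: zmul_diff_right zmul_mult)
    moreover have "n + zmul k (z i - zmul c (z I)) \<in> N"
      using nI(1) c(2) N_add N_zmul by blast
    moreover have "(of_int (k * c) :: rat) / of_int (denom I) = of_int k / of_int (denom i)"
      using c(1) denom_nonzero [of i] denom_nonzero [of I] by simp
    ultimately show ?thesis
      by blast
  qed
  obtain n k i where n: "n \<in> N" "x = n + zmul k (z i)"
    using x unfolding span_def by blast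
  obtain n' k' i' where n': "n' \<in> N" "y = n' + zmul k' (z i')"
    using y unfolding span_def by blast
  obtain n1 k1 where 1: "n1 \<in> N" "x = n1 + zmul k1 (z (max i i'))"
    "(of_int k1 :: rat) / of_int (denom (max i i')) = of_int k / of_int (denom i)"
    using lift [OF n(1), of i "max i i'" k] n(2) by auto
  obtain n2 k2 where 2: "n2 \<in> N" "y = n2 + zmul k2 (z (max i i'))"
    "(of_int k2 :: rat) / of_int (denom (max i i')) = of_int k' / of_int (denom i')"
    using lift [OF n'(1), of i' "max i i'" k'] n'(2) by auto
  have xy: "x + y = (n1 + n2) + zmul (k1 + k2) (z (max i i'))"
    using 1(2) 2(2) by (simp add: zmul_add_left algebra_simps)
  then show "x + y \<in> span"
    unfolding span_def using N_add [OF 1(1) 2(1)] by blast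
  have "height (x + y) = of_int k1 / of_int (denom (max i i')) + of_int k2 / of_int (denom (max i i'))"
    unfolding xy height_eq [OF N_add [OF 1(1) 2(1)]] by (simp add: add_divide_distrib)
  also have "\<dots> = height x + height y"
    unfolding 1(3) 2(3) n(2) n'(2) height_eq [OF n(1)] height_eq [OF n'(1)] ..
  finally show "height (x + y) = height x + height y" .
qed

lemma add_subgroup_span: "add_subgroup span"
  unfolding add_subgroup_def
proof (intro conjI ballI)
  show "0 \<in> span"
    using N_0 N_subset_span by blast
  show "x + y \<in> span" if "x \<in> span" "y \<in> span" for x y
    using span_add that by blast
  fix x
  assume "x \<in> span"
  then obtain n k i where "n \<in> N" "x = n + zmul k (z i)"
    unfolding span_def by blast
  then have "- x = (- n) + zmul (- k) (z i)" "- n \<in> N"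
    using N_uminus by (simp_all add: zmul_minus_left)
  then show "- x \<in> span"
    unfolding span_def by blast
qed

lemma height_eventually_integral:
  assumes "x \<in> span"
  obtains i where "\<And>j. i \<le> j \<Longrightarrow> \<exists>K. of_int (denom j) * height x = of_int K"
proof -
  obtain n k i where x: "n \<in> N" "x = n + zmul k (z i)"
    using assms unfolding span_def by blast
  have "\<exists>K. of_int (denom j) * height x = of_int K" if ij: "i \<le> j" for j
  proof -
    obtain c where "denom j = denom i * c"
      using telescope [OF ij] by blast
    then have "of_int (denom j) * height x = of_int (k * c)"
      using height_eq [OF x(1)] x(2) denom_nonzero [of i] by simp
    then show ?thesis
      by blast
  qed
  with that show ?thesis
    by blast
qed

lemma additive_at_z0:
  fixes h :: "'a \<Rightarrow> nat \<Rightarrow> 'g::ab_group_add"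
  assumes additive: "\<forall>x\<in>span. \<forall>y\<in>span. h (x + y) = h x + h y"
    and vanish: "\<And>x. x \<in> N \<Longrightarrow> h x j = 0"
  shows "h (z 0) j = zmul (denom j) (zmul (m j) (h (z (Suc j)) j))"
proof -
  define e where "e = z 0 - zmul (denom (Suc j)) (z (Suc j))"
  have e: "e \<in> N" "z 0 = e + zmul (denom (Suc j)) (z (Suc j))"
    using z0_minus_multiple [of "Suc j"] unfolding e_def by simp_all
  have "e \<in> span"
    using e(1) N_subset_span by blast
  moreover have "zmul (denom (Suc j)) (z (Suc j)) \<in> span"
    using add_subgroup_zmul [OF add_subgroup_span z_in_span] .
  ultimately have "h (z 0) = h e + h (zmul (denom (Suc j)) (z (Suc j)))"
    using additive e(2) by simp
  also have "h (zmul (denom (Suc j)) (z (Suc j))) = zmul (denom (Suc j)) (h (z (Suc j)))"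
    by (rule additive_on_zmul [OF add_subgroup_span additive z_in_span])
  finally show ?thesis
    using vanish [OF e(1)] by (simp add: zmul_apply denom_Suc zmul_mult)
qed

text \<open>Up to finitely supported errors, \<open>x \<mapsto> (denom j * height x * g j)\<^sub>j\<close> is additive: for each
  pair of elements the scaled heights become integers from some index on.\<close>

definition height_embedding :: "(nat \<Rightarrow> 'g::ab_group_add) \<Rightarrow> 'a \<Rightarrow> nat \<Rightarrow> 'g" where
  "height_embedding g x j =
    (if of_int (denom j) * height x \<in> \<int> then zmul \<lfloor>of_int (denom j) * height x\<rfloor> (g j) else 0)"

lemma height_embedding_eq:
  "of_int (denom j) * height x = of_int K \<Longrightarrow> height_embedding g x j = zmul K (g j)"
  unfolding height_embedding_def by simp

lemma height_embedding_N: "n \<in> N \<Longrightarrow> height_embedding g n = 0"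
  unfolding height_embedding_def using height_N by (simp add: fun_eq_iff)

lemma height_embedding_z0: "height_embedding g (z 0) j = zmul (denom j) (g j)"
  using height_embedding_eq [of j "z 0" "denom j" g] height_z0 by simp

lemma height_embedding_coboundary:
  assumes "u \<in> span" "v \<in> span"
  shows "height_embedding g u + height_embedding g v - height_embedding g (u + v)
    \<in> dsum_omega TYPE('g::ab_group_add)"
proof -
  obtain i1 where i1: "\<And>j. i1 \<le> j \<Longrightarrow> \<exists>K. of_int (denom j) * height u = of_int K"
    using height_eventually_integral [OF assms(1)] by blast
  obtain i2 where i2: "\<And>j. i2 \<le> j \<Longrightarrow> \<exists>K. of_int (denom j) * height v = of_int K"
    using height_eventually_integral [OF assms(2)] by blast
  have "(height_embedding g u + height_embedding g v - height_embedding g (u + v)) j = 0"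
    if "max i1 i2 \<le> j" for j
  proof -
    have "i1 \<le> j" "i2 \<le> j"
      using that by simp_all
    then obtain K1 K2 where
      K: "of_int (denom j) * height u = of_int K1" "of_int (denom j) * height v = of_int K2"
      using i1 i2 by blast
    then have "of_int (denom j) * height (u + v) = of_int (K1 + K2)"
      using span_add [OF assms] by (simp add: distrib_left)
    then show ?thesis
      using height_embedding_eq [OF K(1), of g] height_embedding_eq [OF K(2), of g]
        height_embedding_eq [of j "u + v" "K1 + K2" g]
      by (simp add: zmul_add_left)
  qed
  then have "{j. (height_embedding g u + height_embedding g v - height_embedding g (u + v)) j \<noteq> 0}
      \<subseteq> {..<max i1 i2}"
    by (auto simp: not_less [symmetric])
  then show ?thesis
    unfolding dsum_omega_def using finite_subset by blast
qed

end

theorem (in rat_module) no_nonunit_divisibility_chain: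
  fixes B :: "'a set" and m :: "nat \<Rightarrow> int" and z :: "nat \<Rightarrow> 'a"
  assumes tf: "torsion_free TYPE('g::ab_group_add)" and nuc: "is_nucleus R TYPE('g)"
    and ext: "ext_zero TYPE('a) (dsum_omega TYPE('g))"
    and "finite B" and chain: "divisibility_chain (rspan R smul B) m z"
    and nonunit: "\<And>i. 1 / of_int (m i) \<notin> R"
  shows False
proof -
  interpret divisibility_chain "rspan R smul B" m z
    by (rule chain)
  obtain g :: "nat \<Rightarrow> 'g" where g: "\<And>j y. zmul (m j) y \<noteq> g j"
    using nucleus_not_divisible_family [of R m, OF tf nuc nonzero nonunit] by blast
  have coboundary: "height_embedding g u + height_embedding g v - height_embedding g (u + v)
      \<in> dsum_omega TYPE('g)" if "u \<in> span" "v \<in> span" for u v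
    using height_embedding_coboundary [OF that] .
  obtain gg where gg: "\<And>x. gg x \<in> dsum_omega TYPE('g)"
    and additive: "\<And>x y. x \<in> span \<Longrightarrow> y \<in> span \<Longrightarrow>
      height_embedding g (x + y) - gg (x + y)
        = (height_embedding g x - gg x) + (height_embedding g y - gg y)"
    using ext_zero_additive_correction [OF ext add_subgroup_dsum_omega add_subgroup_span coboundary]
    by blast
  define h where "h x j = height_embedding g x j - gg x j" for x j
  have h_add: "\<forall>x\<in>span. \<forall>y\<in>span. h (x + y) j = h x j + h y j" for j
    using additive unfolding h_def by (simp add: fun_eq_iff algebra_simps)
  obtain J where J: "\<And>t j. t \<in> insert (z 0) B \<Longrightarrow> J \<le> j \<Longrightarrow> gg t j = 0"
    using dsum_omega_uniform_bound [of "insert (z 0) B" gg] \<open>finite B\<close> gg by blast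
  have "h x J = 0" if "x \<in> rspan R smul B" for x
  proof (rule additive_vanishes_on_rspan [OF tf add_subgroup_span N_subset_span h_add _ that])
    show "h t J = 0" if "t \<in> B" for t
      using J [of t J] height_embedding_N [of t g] rspan_superset [OF that] that
      unfolding h_def by simp
  qed
  moreover have "\<forall>x\<in>span. \<forall>y\<in>span. h (x + y) = h x + h y"
    using h_add by (simp add: fun_eq_iff)
  ultimately have "h (z 0) J = zmul (denom J) (zmul (m J) (h (z (Suc J)) J))"
    using additive_at_z0 by blast
  moreover have "h (z 0) J = zmul (denom J) (g J)"
    unfolding h_def using height_embedding_z0 J [of "z 0" J] by simp
  ultimately have "g J = zmul (m J) (h (z (Suc J)) J)"
    using torsion_free_zmul_cancel [OF tf _ denom_nonzero] by simp
  then show False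
    using g [of J "h (z (Suc J)) J"] by simp
qed

section \<open>Countably generated submodules\<close>

lemma rat_bezout:
  fixes q w :: rat
  obtains g :: rat and a b u v :: int
  where "q = of_int a * g" and "w = of_int b * g" and "g = of_int u * q + of_int v * w"
proof -
  obtain a b where ab: "b > 0" "q = of_int a / of_int b"
    by (rule rat_as_fraction)
  obtain c d where cd: "d > 0" "w = of_int c / of_int d"
    by (rule rat_as_fraction)
  define e where "e = gcd (a * d) (c * b)"
  obtain u v where uv: "u * (a * d) + v * (c * b) = e"
    using bezout_int [of "a * d" "c * b"] unfolding e_def by blast
  define g where "g = (of_int e / of_int (b * d) :: rat)"
  have "q = of_int (a * d) / of_int (b * d)" "w = of_int (c * b) / of_int (b * d)"
    using ab cd by simp_all
  moreover have "a * d = e * (a * d div e)" "c * b = e * (c * b div e)"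
    unfolding e_def by simp_all
  ultimately have "q = of_int (a * d div e) * g" "w = of_int (c * b div e) * g"
    unfolding g_def by (metis of_int_mult times_divide_eq_left mult.commute)+
  moreover have "g = of_int u * q + of_int v * w"
    unfolding g_def ab(2) cd(2) uv [symmetric] using ab(1) cd(1) by (simp add: field_simps)
  ultimately show ?thesis
    using that by blast
qed

context
  fixes R :: "rat set" and I :: "rat set"
  assumes R: "rat_subring R"
    and closed: "\<And>u v a b. a \<in> I \<Longrightarrow> b \<in> I \<Longrightarrow> of_int u * a + of_int v * b \<in> I"
    and noncyclic: "\<not> (\<exists>q\<in>I. \<forall>w\<in>I. \<exists>\<rho>\<in>R. w = \<rho> * q)"
begin

lemma noncyclic_nonunit_step:
  assumes q: "q \<in> I" "q \<noteq> 0"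
  obtains a g where "g \<in> I" "g \<noteq> 0" "a \<noteq> 0" "1 / of_int a \<notin> R" "q = of_int a * g"
proof -
  obtain w where w: "w \<in> I" "\<forall>\<rho>\<in>R. w \<noteq> \<rho> * q"
    using noncyclic q(1) by blast
  obtain g a b u v where g: "q = of_int a * g" "w = of_int b * g" "g = of_int u * q + of_int v * w"
    by (rule rat_bezout)
  have "g \<in> I"
    using g(3) closed q(1) w(1) by simp
  moreover have "a \<noteq> 0" "g \<noteq> 0"
    using g(1) q(2) by auto
  moreover have "1 / of_int a \<notin> R"
  proof
    assume "1 / of_int a \<in> R"
    then have "of_int b * (1 / of_int a) \<in> R"
      using rat_subring_mult [OF R rat_subring_of_int [OF R]] by blast
    moreover have "w = (of_int b * (1 / of_int a)) * q"
      using g(1,2) \<open>a \<noteq> 0\<close> by simp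
    ultimately show False
      using w(2) by blast
  qed
  ultimately show ?thesis
    using that g(1) by blast
qed

lemma noncyclic_nonunit_chain:
  assumes "1 \<in> I"
  obtains q :: "nat \<Rightarrow> rat" and m :: "nat \<Rightarrow> int"
  where "q 0 = 1" and "\<And>i. q i \<in> I" and "\<And>i. m i \<noteq> 0" and "\<And>i. 1 / of_int (m i) \<notin> R"
    and "\<And>i. q i = of_int (m i) * q (Suc i)"
proof -
  define good where "good q p \<longleftrightarrow> snd p \<in> I \<and> snd p \<noteq> 0 \<and> fst p \<noteq> 0 \<and> 1 / of_int (fst p) \<notin> R
      \<and> q = of_int (fst p) * snd p" for q and p :: "int \<times> rat"
  have next_step: "\<exists>p. good q p" if "q \<in> I" "q \<noteq> 0" for q
    using noncyclic_nonunit_step [OF that] unfolding good_def by (metis fst_conv snd_conv)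
  define qs where "qs i = rec_nat 1 (\<lambda>_ q. snd (SOME p. good q p)) i" for i
  have qs_Suc: "qs (Suc i) = snd (SOME p. good (qs i) p)" for i
    unfolding qs_def by simp
  have qs: "qs i \<in> I \<and> qs i \<noteq> 0" for i
  proof (induction i)
    case 0
    then show ?case
      using \<open>1 \<in> I\<close> by (simp add: qs_def)
  next
    case (Suc i)
    then show ?case
      using someI_ex [OF next_step [of "qs i"]] qs_Suc unfolding good_def by simp
  qed
  show ?thesis
  proof (rule that [of qs "\<lambda>i. fst (SOME p. good (qs i) p)"])
    show "qs 0 = 1"
      by (simp add: qs_def)
    show "qs i \<in> I" for i
      using qs by blast
    show "fst (SOME p. good (qs i) p) \<noteq> 0" "1 / of_int (fst (SOME p. good (qs i) p)) \<notin> R"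
      "qs i = of_int (fst (SOME p. good (qs i) p)) * qs (Suc i)" for i
      using someI_ex [OF next_step [of "qs i"]] qs [of i] qs_Suc unfolding good_def by simp_all
  qed
qed

end

lemma finite_subset_Union_incseq:
  assumes "finite T" and "T \<subseteq> (\<Union>n. B n)" and "\<And>n. B n \<subseteq> B (Suc n)"
  obtains N :: nat where "T \<subseteq> B N"
proof -
  have mono: "B i \<subseteq> B j" if "i \<le> j" for i j
    using lift_Suc_mono_le [of B, OF assms(3) that] .
  have "\<exists>N. T \<subseteq> B N"
    using assms(1,2)
  proof (induction T rule: finite_induct)
    case empty
    then show ?case by simp
  next
    case (insert t T)
    then obtain N i where "T \<subseteq> B N" "t \<in> B i"
      by blast
    then have "insert t T \<subseteq> B (max N i)"
      using mono [of N "max N i"] mono [of i "max N i"] by auto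
    then show ?case
      by blast
  qed
  with that show ?thesis
    by blast
qed

locale countable_generators = rat_module R smul
    for R :: "rat set" and smul :: "rat \<Rightarrow> 'a::ab_group_add \<Rightarrow> 'a" +
  fixes M :: "'a set" and x :: "nat \<Rightarrow> 'a"
  assumes torsion_free: "torsion_free TYPE('a)"
    and submodule: "rsubmodule R smul M"
    and generators: "\<And>i. x i \<in> M"
    and span_generators: "rspan R smul (range x) = M"
begin

definition stage :: "nat \<Rightarrow> 'a set" where
  "stage n = rspan R smul (x ` {..<n})"

definition pure_stage :: "nat \<Rightarrow> 'a set" where
  "pure_stage n = {y \<in> M. \<exists>k. k \<noteq> 0 \<and> zmul k y \<in> stage n}"

lemma stage_subset: "stage n \<subseteq> M"
  unfolding stage_def using rspan_subset [OF submodule] generators by blast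

lemma stage_mono: "n \<le> n' \<Longrightarrow> stage n \<subseteq> stage n'"
  unfolding stage_def by (rule rspan_mono) auto

lemma stage_Suc: "stage (Suc n) = rspan R smul (insert (x n) (x ` {..<n}))"
  unfolding stage_def by (simp add: lessThan_Suc)

lemma stage_0: "stage 0 = {0}"
  unfolding stage_def using rspan_empty by simp

lemma stage_subset_pure_stage: "stage n \<subseteq> pure_stage n"
  unfolding pure_stage_def using stage_subset by (force intro: exI [of _ 1])

lemma pure_stage_subset: "pure_stage n \<subseteq> M"
  unfolding pure_stage_def by blast

lemma pure_stage_mono: "n \<le> n' \<Longrightarrow> pure_stage n \<subseteq> pure_stage n'"
  unfolding pure_stage_def using stage_mono by blast

lemma rsubmodule_pure_stage: "rsubmodule R smul (pure_stage n)"
  unfolding rsubmodule_def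
proof (intro conjI ballI)
  show "0 \<in> pure_stage n"
    using stage_subset_pure_stage rspan_0 unfolding stage_def by blast
next
  fix a b
  assume "a \<in> pure_stage n" "b \<in> pure_stage n"
  then obtain k k' where k: "k \<noteq> 0" "zmul k a \<in> stage n" "k' \<noteq> 0" "zmul k' b \<in> stage n"
    and "a \<in> M" "b \<in> M"
    unfolding pure_stage_def by blast
  have "zmul (k' * k) (a + b) = zmul k' (zmul k a) + zmul k (zmul k' b)"
    by (simp add: zmul_add_right zmul_mult [symmetric] mult.commute)
  then have "zmul (k' * k) (a + b) \<in> stage n"
    using k rspan_zmul rspan_add unfolding stage_def by simp
  moreover have "a + b \<in> M"
    using submodule \<open>a \<in> M\<close> \<open>b \<in> M\<close> unfolding rsubmodule_def by blast
  moreover have "k' * k \<noteq> 0"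
    using k by simp
  ultimately show "a + b \<in> pure_stage n"
    unfolding pure_stage_def by blast
next
  fix r a
  assume r: "r \<in> R" and "a \<in> pure_stage n"
  then obtain k where k: "k \<noteq> 0" "zmul k a \<in> stage n" "a \<in> M"
    unfolding pure_stage_def by blast
  have "zmul k (smul r a) \<in> stage n"
    using smul_zmul [OF r] rspan_smul [OF r] k(2) unfolding stage_def by metis
  moreover have "smul r a \<in> M"
    using submodule k(3) r unfolding rsubmodule_def by blast
  ultimately show "smul r a \<in> pure_stage n"
    unfolding pure_stage_def using k(1) by blast
qed

lemma pure_stage_0: "pure_stage 0 = {0}"
  using torsion_free_zmul_eq_0 [OF torsion_free] rsubmodule_pure_stage [of 0]
  unfolding pure_stage_def stage_0 rsubmodule_def by blast

lemma pure_stage_add: "a \<in> pure_stage n \<Longrightarrow> b \<in> pure_stage n \<Longrightarrow> a + b \<in> pure_stage n"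
  and pure_stage_smul: "r \<in> R \<Longrightarrow> a \<in> pure_stage n \<Longrightarrow> smul r a \<in> pure_stage n"
  using rsubmodule_pure_stage unfolding rsubmodule_def by blast+

lemma pure_stage_zmul: "a \<in> pure_stage n \<Longrightarrow> zmul k a \<in> pure_stage n"
  using pure_stage_smul [OF R_of_int] smul_of_int by metis

lemma pure_stage_Suc_eq:
  assumes "k \<noteq> 0" and "zmul k (x n) \<in> stage n"
  shows "pure_stage (Suc n) = pure_stage n"
proof
  show "pure_stage (Suc n) \<subseteq> pure_stage n"
  proof
    fix y
    assume "y \<in> pure_stage (Suc n)"
    then obtain k' where y: "y \<in> M" "k' \<noteq> 0" "zmul k' y \<in> stage (Suc n)"
      unfolding pure_stage_def by blast
    then obtain l r where lr: "l \<in> stage n" "r \<in> R" "zmul k' y = l + smul r (x n)"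
      unfolding stage_Suc by (auto elim: rspan_insertE simp: stage_def)
    have "zmul (k * k') y = zmul k l + smul r (zmul k (x n))"
      using lr(3) smul_zmul [OF lr(2)] by (simp add: zmul_mult zmul_add_right)
    then have "zmul (k * k') y \<in> stage n"
      using rspan_add rspan_zmul rspan_smul lr assms unfolding stage_def by simp
    moreover have "k * k' \<noteq> 0"
      using y assms by simp
    ultimately show "y \<in> pure_stage n"
      unfolding pure_stage_def using y by blast
  qed
  show "pure_stage n \<subseteq> pure_stage (Suc n)"
    by (rule pure_stage_mono) simp
qed

text \<open>When \<open>x\<^sub>n\<close> is independent of the earlier generators, \<open>coordinate\<close> embeds
  \<open>pure_stage (Suc n) / pure_stage n\<close> into \<open>\<rat>\<close> by \<open>y \<mapsto> r / k\<close> where \<open>k y = l + r x\<^sub>n\<close>,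
  \<open>l \<in> stage n\<close>.\<close>

context
  fixes n :: nat
  assumes x_free: "\<And>k. zmul k (x n) \<in> stage n \<Longrightarrow> k = 0"
begin

lemma smul_x_in_stage:
  assumes "\<rho> \<in> R" and "smul \<rho> (x n) \<in> stage n"
  shows "\<rho> = 0"
proof -
  obtain a b where "b > 0" and ab: "\<rho> = of_int a / of_int b"
    by (rule rat_as_fraction)
  then have "zmul a (x n) = zmul b (smul \<rho> (x n))"
    using zmul_denom_smul [OF assms(1) ab] by simp
  then have "zmul a (x n) \<in> stage n"
    using rspan_zmul assms(2) unfolding stage_def by simp
  then show ?thesis
    using x_free ab by simp
qed

lemma pure_stage_Suc_decomp:
  assumes "y \<in> pure_stage (Suc n)"
  obtains k l r where "k \<noteq> 0" and "l \<in> stage n" and "r \<in> R" and "zmul k y = l + smul r (x n)"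
proof -
  obtain k where k: "k \<noteq> 0" "zmul k y \<in> stage (Suc n)"
    using assms unfolding pure_stage_def by blast
  then obtain l r where "l \<in> stage n" "r \<in> R" "zmul k y = l + smul r (x n)"
    unfolding stage_Suc by (auto elim: rspan_insertE simp: stage_def)
  with k(1) show ?thesis
    using that by blast
qed

lemma coordinate_well_defined:
  assumes "k \<noteq> 0" "l \<in> stage n" "r \<in> R" "zmul k y = l + smul r (x n)"
    and "k' \<noteq> 0" "l' \<in> stage n" "r' \<in> R" "zmul k' y = l' + smul r' (x n)"
  shows "r / of_int k = r' / of_int k'"
proof -
  have "zmul k' (zmul k y) = zmul k (zmul k' y)"
    by (simp add: zmul_mult [symmetric] mult.commute)
  then have "zmul k' l + smul (of_int k' * r) (x n) = zmul k l' + smul (of_int k * r') (x n)"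
    using assms smul_of_int_mult by (simp add: zmul_add_right)
  then have "smul (of_int k' * r) (x n) - smul (of_int k * r') (x n) = zmul k l' - zmul k' l"
    by (simp add: algebra_simps)
  moreover have "smul (of_int k' * r - of_int k * r') (x n)
      = smul (of_int k' * r) (x n) - smul (of_int k * r') (x n)"
    by (rule smul_diff_left [OF R_mult [OF R_of_int assms(3)] R_mult [OF R_of_int assms(7)]])
  ultimately have "smul (of_int k' * r - of_int k * r') (x n) \<in> stage n"
    using rspan_diff rspan_zmul assms(2,6) unfolding stage_def by simp
  then have "of_int k' * r - of_int k * r' = 0"
    by (rule smul_x_in_stage [OF R_diff [OF R_mult [OF R_of_int assms(3)] R_mult [OF R_of_int assms(7)]]])
  then show ?thesis
    using assms(1,5) by (simp add: field_simps)
qed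

definition coordinate :: "'a \<Rightarrow> rat" where
  "coordinate y = (THE q. \<exists>k l r. k \<noteq> 0 \<and> l \<in> stage n \<and> r \<in> R \<and> zmul k y = l + smul r (x n)
    \<and> q = r / of_int k)"

lemma coordinate_eq:
  assumes "k \<noteq> 0" "l \<in> stage n" "r \<in> R" "zmul k y = l + smul r (x n)"
  shows "coordinate y = r / of_int k"
  unfolding coordinate_def
proof (rule the_equality)
  show "\<exists>k' l' r'. k' \<noteq> 0 \<and> l' \<in> stage n \<and> r' \<in> R \<and> zmul k' y = l' + smul r' (x n)
      \<and> r / of_int k = r' / of_int k'"
    using assms by blast
next
  fix q :: rat
  assume "\<exists>k' l' r'. k' \<noteq> 0 \<and> l' \<in> stage n \<and> r' \<in> R \<and> zmul k' y = l' + smul r' (x n)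
      \<and> q = r' / of_int k'"
  then obtain k' l' r' where "k' \<noteq> 0" "l' \<in> stage n" "r' \<in> R" "zmul k' y = l' + smul r' (x n)"
    and q: "q = r' / of_int k'"
    by blast
  then show "q = r / of_int k"
    using coordinate_well_defined [OF assms] by simp
qed

lemma coordinate_add:
  assumes "a \<in> pure_stage (Suc n)" "b \<in> pure_stage (Suc n)"
  shows "coordinate (a + b) = coordinate a + coordinate b"
proof -
  obtain k l r where 1: "k \<noteq> 0" "l \<in> stage n" "r \<in> R" "zmul k a = l + smul r (x n)"
    using pure_stage_Suc_decomp [OF assms(1)] by blast
  obtain k' l' r' where 2: "k' \<noteq> 0" "l' \<in> stage n" "r' \<in> R" "zmul k' b = l' + smul r' (x n)"
    using pure_stage_Suc_decomp [OF assms(2)] by blast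
  have "zmul (k * k') (a + b) = zmul k' (zmul k a) + zmul k (zmul k' b)"
    by (simp add: zmul_add_right zmul_mult [symmetric] mult.commute)
  also have "\<dots> = (zmul k' l + zmul k l') + (smul (of_int k' * r) (x n) + smul (of_int k * r') (x n))"
    using 1 2 smul_of_int_mult by (simp add: zmul_add_right algebra_simps)
  also have "\<dots> = (zmul k' l + zmul k l') + smul (of_int k' * r + of_int k * r') (x n)"
    using smul_add_left [OF R_mult [OF R_of_int 1(3)] R_mult [OF R_of_int 2(3)]] by simp
  finally have eq: "zmul (k * k') (a + b)
      = (zmul k' l + zmul k l') + smul (of_int k' * r + of_int k * r') (x n)" .
  have "zmul k' l + zmul k l' \<in> stage n"
    using rspan_add rspan_zmul 1(2) 2(2) unfolding stage_def by blast
  then have "coordinate (a + b) = (of_int k' * r + of_int k * r') / of_int (k * k')"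
    using coordinate_eq [OF _ _ R_add [OF R_mult [OF R_of_int 1(3)] R_mult [OF R_of_int 2(3)]] eq]
      1(1) 2(1) by simp
  also have "\<dots> = r / of_int k + r' / of_int k'"
    using 1(1) 2(1) by (simp add: field_simps)
  also have "\<dots> = coordinate a + coordinate b"
    using coordinate_eq [OF 1] coordinate_eq [OF 2] by simp
  finally show ?thesis .
qed

lemma coordinate_smul:
  assumes "\<rho> \<in> R" "a \<in> pure_stage (Suc n)"
  shows "coordinate (smul \<rho> a) = \<rho> * coordinate a"
proof -
  obtain k l r where 1: "k \<noteq> 0" "l \<in> stage n" "r \<in> R" "zmul k a = l + smul r (x n)"
    using pure_stage_Suc_decomp [OF assms(2)] by blast
  have "zmul k (smul \<rho> a) = smul \<rho> (zmul k a)"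
    using smul_zmul [OF assms(1)] by simp
  also have "\<dots> = smul \<rho> l + smul (\<rho> * r) (x n)"
    using 1(4) smul_add_right [OF assms(1)] smul_mult [OF assms(1) 1(3)] by simp
  finally have eq: "zmul k (smul \<rho> a) = smul \<rho> l + smul (\<rho> * r) (x n)" .
  have "smul \<rho> l \<in> stage n"
    using rspan_smul [OF assms(1)] 1(2) unfolding stage_def by blast
  then have "coordinate (smul \<rho> a) = (\<rho> * r) / of_int k"
    using coordinate_eq [OF 1(1) _ R_mult [OF assms(1) 1(3)] eq] by blast
  then show ?thesis
    using coordinate_eq [OF 1] by simp
qed

lemma coordinate_zmul: "a \<in> pure_stage (Suc n) \<Longrightarrow> coordinate (zmul k a) = of_int k * coordinate a"
  using coordinate_smul [OF R_of_int, of a k] smul_of_int by simp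

lemma coordinate_eq_0_iff:
  assumes "a \<in> pure_stage (Suc n)"
  shows "coordinate a = 0 \<longleftrightarrow> a \<in> pure_stage n"
proof -
  obtain k l r where 1: "k \<noteq> 0" "l \<in> stage n" "r \<in> R" "zmul k a = l + smul r (x n)"
    using pure_stage_Suc_decomp [OF assms] by blast
  have a: "coordinate a = r / of_int k"
    using coordinate_eq 1 by blast
  show ?thesis
  proof
    assume "coordinate a = 0"
    then have "zmul k a \<in> stage n"
      using a 1 by simp
    then show "a \<in> pure_stage n"
      unfolding pure_stage_def using 1(1) assms pure_stage_subset by blast
  next
    assume "a \<in> pure_stage n"
    then obtain k' where "k' \<noteq> 0" "zmul k' a \<in> stage n"
      unfolding pure_stage_def by blast
    then show "coordinate a = 0"
      using coordinate_eq [of k' "zmul k' a" 0 a] R_0 by simp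
  qed
qed

lemma x_in_pure_stage_Suc: "x n \<in> pure_stage (Suc n)"
proof -
  have "x n \<in> stage (Suc n)"
    unfolding stage_Suc by (rule rspan_superset) simp
  then show ?thesis
    using stage_subset_pure_stage by blast
qed

lemma coordinate_x: "coordinate (x n) = 1"
proof -
  have "0 \<in> stage n"
    unfolding stage_def by (rule rspan_0)
  then show ?thesis
    using coordinate_eq [OF _ _ R_1, of 1 0 "x n"] by simp
qed

lemma rspan_insert_generator:
  assumes B: "rspan R smul B = pure_stage n"
    and y: "y \<in> pure_stage (Suc n)"
    and generates: "\<And>w. w \<in> pure_stage (Suc n) \<Longrightarrow> \<exists>\<rho>\<in>R. coordinate w = \<rho> * coordinate y"
  shows "rspan R smul (insert y B) = pure_stage (Suc n)"
proof
  have "B \<subseteq> pure_stage n"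
    using B rspan_superset by blast
  then have "insert y B \<subseteq> pure_stage (Suc n)"
    using pure_stage_mono [of n "Suc n"] y by auto
  then show "rspan R smul (insert y B) \<subseteq> pure_stage (Suc n)"
    by (rule rspan_subset [OF rsubmodule_pure_stage])
  show "pure_stage (Suc n) \<subseteq> rspan R smul (insert y B)"
  proof
    fix w
    assume w: "w \<in> pure_stage (Suc n)"
    then obtain \<rho> where \<rho>: "\<rho> \<in> R" "coordinate w = \<rho> * coordinate y"
      using generates by blast
    define w' where "w' = w + smul (- \<rho>) y"
    have y': "smul (- \<rho>) y \<in> pure_stage (Suc n)"
      using pure_stage_smul R_uminus \<rho>(1) y by blast
    have "coordinate w' = 0"
      unfolding w'_def using coordinate_add [OF w y'] coordinate_smul [OF R_uminus y] \<rho> by simp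
    then have "w' \<in> rspan R smul B"
      using coordinate_eq_0_iff pure_stage_add [OF w y'] B unfolding w'_def by blast
    moreover have "w = w' + smul \<rho> y"
      unfolding w'_def using smul_add_left [OF R_uminus [OF \<rho>(1)] \<rho>(1), of y]
      by (simp add: algebra_simps)
    ultimately show "w \<in> rspan R smul (insert y B)"
      using rspan_insertI \<rho>(1) by simp
  qed
qed

lemma rindep_insert_coordinate:
  assumes B: "rindep R smul B" "rspan R smul B = pure_stage n"
    and y: "y \<in> pure_stage (Suc n)" "coordinate y \<noteq> 0"
  shows "rindep R smul (insert y B)"
  unfolding rindep_def
proof (intro allI impI ballI)
  fix T c t
  assume T: "finite T" "T \<subseteq> insert y B" "\<forall>t\<in>T. c t \<in> R" "(\<Sum>t\<in>T. smul (c t) t) = 0" "t \<in> T"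
  show "c t = 0"
  proof (cases "y \<in> T")
    case False
    then have "T \<subseteq> B"
      using T(2) by blast
    then show ?thesis
      using B(1) T unfolding rindep_def by blast
  next
    case True
    have sum: "(\<Sum>t\<in>T. smul (c t) t) = smul (c y) y + (\<Sum>t\<in>T - {y}. smul (c t) t)"
      using sum.remove [OF T(1) True] by simp
    have TB: "T - {y} \<subseteq> B"
      using T(2) by blast
    have rest: "(\<Sum>t\<in>T - {y}. smul (c t) t) \<in> rspan R smul B"
      unfolding rspan_def using T(1,3) TB by (intro CollectI exI [of _ "T - {y}"] exI [of _ c]) auto
    have "smul (c y) y = - (\<Sum>t\<in>T - {y}. smul (c t) t)"
      using sum T(4) by (simp add: add_eq_0_iff2)
    then have "smul (c y) y \<in> pure_stage n"
      using rest B(2) rspan_uminus by metis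
    then have "c y * coordinate y = 0"
      using coordinate_eq_0_iff [OF pure_stage_smul [OF _ y(1)]] coordinate_smul [OF _ y(1)] T(3) True
      by metis
    then have cy: "c y = 0"
      using y(2) by simp
    then have "(\<Sum>t\<in>T - {y}. smul (c t) t) = 0"
      using sum T(4) by simp
    then have "\<forall>t\<in>T - {y}. c t = 0"
      using B(1) T(1,3) TB unfolding rindep_def by blast
    then show ?thesis
      using cy T(5) by (cases "t = y") auto
  qed
qed

lemma coordinate_image_closed:
  assumes "a \<in> coordinate ` pure_stage (Suc n)" and "b \<in> coordinate ` pure_stage (Suc n)"
  shows "of_int u * a + of_int v * b \<in> coordinate ` pure_stage (Suc n)"
proof -
  obtain ya yb where y: "ya \<in> pure_stage (Suc n)" "yb \<in> pure_stage (Suc n)"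
    "a = coordinate ya" "b = coordinate yb"
    using assms by blast
  then have "zmul u ya + zmul v yb \<in> pure_stage (Suc n)"
    using pure_stage_add pure_stage_zmul by blast
  moreover have "coordinate (zmul u ya + zmul v yb) = of_int u * a + of_int v * b"
    using coordinate_add coordinate_zmul pure_stage_zmul y by simp
  ultimately show ?thesis
    by (metis image_eqI)
qed

lemma divisibility_chain_from_coordinates:
  assumes B: "rspan R smul B = pure_stage n"
    and q: "q 0 = 1" "\<And>i. q i \<in> coordinate ` pure_stage (Suc n)"
    and m: "\<And>i. m i \<noteq> 0" "\<And>i. q i = of_int (m i) * q (Suc i)"
  obtains z where "divisibility_chain (rspan R smul B) m z"
proof -
  define z where "z i = (SOME y. y \<in> pure_stage (Suc n) \<and> coordinate y = q i)" for i
  have z: "z i \<in> pure_stage (Suc n)" "coordinate (z i) = q i" for i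
  proof -
    have "\<exists>y. y \<in> pure_stage (Suc n) \<and> coordinate y = q i"
      using q(2) [of i] by (metis imageE)
    from someI_ex [OF this] show "z i \<in> pure_stage (Suc n)" "coordinate (z i) = q i"
      unfolding z_def by blast+
  qed
  have "divisibility_chain (rspan R smul B) m z"
  proof
    show "add_subgroup (rspan R smul B)"
      by (rule add_subgroup_rspan)
    show "m i \<noteq> 0" for i
      by (rule m(1))
    show "z i - zmul (m i) (z (Suc i)) \<in> rspan R smul B" for i
    proof -
      have mz: "zmul (- m i) (z (Suc i)) \<in> pure_stage (Suc n)"
        using pure_stage_zmul z(1) by blast
      have "coordinate (z i + zmul (- m i) (z (Suc i))) = 0"
        using coordinate_add [OF z(1) mz] coordinate_zmul [OF z(1)] z(2) m(2) [of i] by simp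
      then show ?thesis
        using coordinate_eq_0_iff pure_stage_add [OF z(1) mz] B by (simp add: zmul_minus_left)
    qed
    show "k = 0" if "zmul k (z 0) \<in> rspan R smul B" for k
    proof -
      have "coordinate (zmul k (z 0)) = 0"
        using that coordinate_eq_0_iff pure_stage_zmul [OF z(1)] B by blast
      then show ?thesis
        using coordinate_zmul [OF z(1)] z(2) q(1) by simp
    qed
  qed
  with that show ?thesis
    by blast
qed

end

lemma pure_stage_Suc_basis:
  assumes no_chain: "\<And>B m z. finite B \<Longrightarrow> divisibility_chain (rspan R smul B) m z \<Longrightarrow>
      (\<And>i. 1 / of_int (m i) \<notin> R) \<Longrightarrow> False"
    and B: "finite B" "rindep R smul B" "rspan R smul B = pure_stage n"
  obtains B' where "B \<subseteq> B'" and "finite B'" and "rindep R smul B'" and "rspan R smul B' = pure_stage (Suc n)"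
proof (cases "\<exists>k. k \<noteq> 0 \<and> zmul k (x n) \<in> stage n")
  case True
  then show ?thesis
    using pure_stage_Suc_eq B that by blast
next
  case False
  then have x_free: "\<And>k. zmul k (x n) \<in> stage n \<Longrightarrow> k = 0"
    by blast
  show ?thesis
  proof (cases "\<exists>q\<in>coordinate n ` pure_stage (Suc n). \<forall>w\<in>coordinate n ` pure_stage (Suc n). \<exists>\<rho>\<in>R. w = \<rho> * q")
    case True
    then obtain y where y: "y \<in> pure_stage (Suc n)"
      and generates: "\<And>w. w \<in> pure_stage (Suc n) \<Longrightarrow> \<exists>\<rho>\<in>R. coordinate n w = \<rho> * coordinate n y"
      by blast
    have "coordinate n y \<noteq> 0"
      using generates [OF x_in_pure_stage_Suc [of n, OF x_free]] coordinate_x [of n, OF x_free] by auto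
    then show ?thesis
      using rindep_insert_coordinate [of n, OF x_free B(2,3) y]
        rspan_insert_generator [of n, OF x_free B(3) y generates]
        B(1) that [of "insert y B"]
      by blast
  next
    case False
    obtain q m where "q 0 = 1" "\<And>i. q i \<in> coordinate n ` pure_stage (Suc n)"
      and m: "\<And>i. m i \<noteq> 0" "\<And>i. 1 / of_int (m i) \<notin> R" "\<And>i. q i = of_int (m i) * q (Suc i)"
      using noncyclic_nonunit_chain [OF subring coordinate_image_closed [of n, OF x_free] False]
        coordinate_x [of n, OF x_free] x_in_pure_stage_Suc [of n, OF x_free]
      by (metis image_eqI)
    then obtain z where "divisibility_chain (rspan R smul B) m z"
      using divisibility_chain_from_coordinates [of n, OF x_free B(3)] by blast
    with no_chain [OF B(1)] m(2) show ?thesis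
      by blast
  qed
qed

lemma in_some_stage:
  assumes "y \<in> M"
  obtains N where "y \<in> stage N"
proof -
  obtain T c where T: "finite T" "T \<subseteq> range x" "\<forall>t\<in>T. c t \<in> R" "y = (\<Sum>t\<in>T. smul (c t) t)"
    using assms span_generators unfolding rspan_def by blast
  have "range x \<subseteq> (\<Union>N. x ` {..<N})"
  proof
    fix t
    assume "t \<in> range x"
    then obtain i where "t = x i"
      by blast
    then show "t \<in> (\<Union>N. x ` {..<N})"
      by (intro UN_I [of "Suc i"]) auto
  qed
  moreover have "x ` {..<N} \<subseteq> x ` {..<Suc N}" for N
    by auto
  ultimately obtain N where "T \<subseteq> x ` {..<N}"
    using finite_subset_Union_incseq [OF T(1)] T(2) by (metis subset_trans)
  then have "y \<in> stage N"
    unfolding stage_def rspan_def using T(1,3,4)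
    by (intro CollectI exI [of _ T] exI [of _ c]) auto
  with that show ?thesis
    by blast
qed

context
  assumes no_chain: "\<And>B m z. finite B \<Longrightarrow> divisibility_chain (rspan R smul B) m z \<Longrightarrow>
      (\<And>i. 1 / of_int (m i) \<notin> R) \<Longrightarrow> False"
begin

lemma pure_stage_bases:
  obtains basis :: "nat \<Rightarrow> 'a set"
  where "\<And>n. finite (basis n)" and "\<And>n. rindep R smul (basis n)"
    and "\<And>n. rspan R smul (basis n) = pure_stage n" and "\<And>n. basis n \<subseteq> basis (Suc n)"
proof -
  define basis_step where "basis_step n B = (SOME B'. B \<subseteq> B' \<and> finite B' \<and> rindep R smul B'
    \<and> rspan R smul B' = pure_stage (Suc n))" for n B
  define basis where "basis n = rec_nat {} basis_step n" for n
  have step: "basis n \<subseteq> basis (Suc n) \<and> finite (basis (Suc n)) \<and> rindep R smul (basis (Suc n))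
      \<and> rspan R smul (basis (Suc n)) = pure_stage (Suc n)"
    if B: "finite (basis n)" "rindep R smul (basis n)" "rspan R smul (basis n) = pure_stage n" for n
  proof -
    obtain B' where "basis n \<subseteq> B'" "finite B'" "rindep R smul B'" "rspan R smul B' = pure_stage (Suc n)"
      by (rule pure_stage_Suc_basis [OF no_chain B])
    then have "\<exists>B'. basis n \<subseteq> B' \<and> finite B' \<and> rindep R smul B' \<and> rspan R smul B' = pure_stage (Suc n)"
      by blast
    from someI_ex [OF this] show ?thesis
      unfolding basis_def basis_step_def by simp
  qed
  have basis: "finite (basis n) \<and> rindep R smul (basis n) \<and> rspan R smul (basis n) = pure_stage n" for n
  proof (induction n)
    case 0
    have "rindep R smul {}"
      unfolding rindep_def by blast
    then show ?case
      using pure_stage_0 rspan_empty by (simp add: basis_def)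
  next
    case (Suc n)
    then show ?case
      using step by blast
  qed
  show ?thesis
  proof (rule that)
    show "finite (basis n)" "rindep R smul (basis n)" "rspan R smul (basis n) = pure_stage n" for n
      using basis by blast+
    show "basis n \<subseteq> basis (Suc n)" for n
      using basis step by blast
  qed
qed

lemma rfree_submodule: "rfree R smul M"
proof -
  obtain basis where basis: "\<And>n. finite (basis n)" "\<And>n. rindep R smul (basis n)"
    "\<And>n. rspan R smul (basis n) = pure_stage n" and mono: "\<And>n. basis n \<subseteq> basis (Suc n)"
    using pure_stage_bases by blast
  define U where "U = (\<Union>n. basis n)"
  have "basis n \<subseteq> pure_stage n" for n
    using basis(3) [of n] rspan_superset by blast
  then have "U \<subseteq> M"
    unfolding U_def using pure_stage_subset by blast
  moreover have "rindep R smul U"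
    unfolding rindep_def
  proof (intro allI impI)
    fix T c
    assume T: "finite T" "T \<subseteq> U" "\<forall>t\<in>T. c t \<in> R" "(\<Sum>t\<in>T. smul (c t) t) = 0"
    obtain N where "T \<subseteq> basis N"
      using finite_subset_Union_incseq [where B = basis, OF T(1) _ mono] T(2) unfolding U_def by blast
    then show "\<forall>t\<in>T. c t = 0"
      using basis(2) [of N] T unfolding rindep_def by blast
  qed
  moreover have "M \<subseteq> rspan R smul U"
  proof
    fix y
    assume "y \<in> M"
    then obtain N where "y \<in> stage N"
      by (rule in_some_stage)
    then have "y \<in> rspan R smul (basis N)"
      using stage_subset_pure_stage basis(3) by blast
    then show "y \<in> rspan R smul U"
      using rspan_mono [of "basis N" U] unfolding U_def by blast
  qed
  ultimately show ?thesis
    unfolding rfree_def using rspan_subset [OF submodule] by blast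
qed

end

end

theorem (in rat_module) countably_generated_rfree:
  assumes tf: "torsion_free TYPE('a)"
    and no_chain: "\<And>B m z. finite B \<Longrightarrow> divisibility_chain (rspan R smul B) m z \<Longrightarrow>
      (\<And>i. 1 / of_int (m i) \<notin> R) \<Longrightarrow> False"
    and M: "rsubmodule R smul M" and S: "countable S" "S \<subseteq> M" "rspan R smul S = M"
  shows "rfree R smul M"
proof (cases "S = {}")
  case True
  have "rindep R smul {}"
    unfolding rindep_def by blast
  then show ?thesis
    unfolding rfree_def using S(3) True by blast
next
  case False
  have range: "range (from_nat_into S) = S"
    using range_from_nat_into [OF False S(1)] .
  interpret countable_generators R smul M "from_nat_into S"
    using tf M S(2,3) range by unfold_locales auto
  show ?thesis
    by (rule rfree_submodule [OF no_chain])
qed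

theorem proposition7p2:
  fixes R :: "rat set"
  assumes "torsion_free TYPE('a::ab_group_add)" and "nonzero_group TYPE('a)"
    and "torsion_free TYPE('g::ab_group_add)" and "nonzero_group TYPE('g)"
    and "is_nucleus R TYPE('a)" and "is_nucleus R TYPE('g)"
    and "ext_zero TYPE('a) (dsum_omega TYPE('g))"
  shows "\<forall>smul :: rat \<Rightarrow> 'a \<Rightarrow> 'a. rmodule R smul \<longrightarrow> aleph1_free R smul"
proof (intro allI impI)
  fix smul :: "rat \<Rightarrow> 'a \<Rightarrow> 'a"
  assume "rmodule R smul"
  then interpret rat_module R smul
    using assms(5) unfolding is_nucleus_def rat_module_def by blast
  show "aleph1_free R smul"
    unfolding aleph1_free_def
  proof (intro allI impI)
    fix M
    assume M: "rsubmodule R smul M" and "\<exists>S. countable S \<and> S \<subseteq> M \<and> rspan R smul S = M"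
    then obtain S where S: "countable S" "S \<subseteq> M" "rspan R smul S = M"
      by blast
    show "rfree R smul M"
    proof (rule countably_generated_rfree [OF assms(1) _ M S])
      show False
        if "finite B" "divisibility_chain (rspan R smul B) m z" "\<And>i. 1 / of_int (m i) \<notin> R" for B m z
        using no_nonunit_divisibility_chain [OF assms(3,6,7) that] .
    qed
  qed
qed

end
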